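(* Let $\mathcal{V}$ be a real, separable, infinite-dimensional Hilbert space with orthonormal basis $(e_n)_{n\ge1}$, $\mathcal{X}=\{v=\sum_n c_ne_n:\sum_n|c_n|\le1\}$, $\mathcal{Y}=\{v\in\mathcal{V}:\|v\|\le1\}$. For $k\in\mathbb{N}$ let $b_k[n]\in\{0,1\}$ denote the $n$-th bit of the binary representation of $k$, define $f_k:\mathcal{V}\to\mathcal{V}$ by $f_k(v)=\big(\sum_{n\ge1}b_k[n]\langle e_n,v\rangle\big)e_k$, let $f_0=0$, and $\mathcal{F}=\{f_k:k\in\mathbb{N}\}\cup\{f_0\}$. Then $\mathcal{F}\subset S_1(\mathcal{V},\mathcal{V})$; for every $T$ there is a fixed sequence $(x_1,y_1),\dots,(x_T,y_T)\in\mathcal{X}\times\mathcal{Y}$ (namely $x_t=e_t$, $y_t=0$) such that $\mathbb{E}_\sigma\big[\sup_{f\in\mathcal{F}}\sum_{t=1}^T\sigma_t\|f(x_t)-y_t\|^2\big]\ge T/2$ for i.i.d. uniform signs $\sigma_t\in\{-1,1\}$ (so the i.i.d. uniform law of large numbers fails for the squared-loss class of $\mathcal{F}$); and nevertheless $\mathcal{F}$ is batch learnable, i.e. $\limsup_{n\to\infty}\mathcal{E}_n(\mathcal{F})=0$.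
   Context: $S_1(\mathcal{V},\mathcal{V})$ is the set of trace-class (compact, summable singular values) operators. Batch setting: a learning rule $\hat f_n$ maps a sample in $(\mathcal{X}\times\mathcal{Y})^n$ to a predictor $\mathcal{X}\to\mathcal{Y}$; \[\mathcal{E}_n(\mathcal{F})=\inf_{\hat f_n}\sup_{\mathcal{D}}\mathbb{E}_{S\sim\mathcal{D}^n}\Big[\mathbb{E}_{(x,y)\sim\mathcal{D}}\|\hat f_n(x)-y\|^2-\inf_{f\in\mathcal{F}}\mathbb{E}_{(x,y)\sim\mathcal{D}}\|f(x)-y\|^2\Big],\] the supremum being over all distributions $\mathcal{D}$ on $\mathcal{X}\times\mathcal{Y}$. *)

theory Defs
  imports "HOL-Analysis.Analysis" "HOL-Probability.Probability"
begin

definition onb :: "(nat \<Rightarrow> 'v::real_inner) \<Rightarrow> bool" where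
  "onb e \<longleftrightarrow> (\<forall>m n. m \<ge> 1 \<longrightarrow> n \<ge> 1 \<longrightarrow> e m \<bullet> e n = (if m = n then 1 else 0))
              \<and> closure (span (e ` {1..})) = UNIV"

definition compact_op :: "('a::real_normed_vector \<Rightarrow> 'b::real_normed_vector) \<Rightarrow> bool" where
  "compact_op T \<longleftrightarrow> bounded_linear T \<and> compact (closure (T ` cball 0 1))"

definition trace_class :: "('a::real_inner \<Rightarrow> 'b::real_inner) \<Rightarrow> bool" where
  "trace_class T \<longleftrightarrow> compact_op T \<and>
     (\<exists>(s::nat \<Rightarrow> real) (u::nat \<Rightarrow> 'a) (w::nat \<Rightarrow> 'b).
        (\<forall>n. s n \<ge> 0) \<and> summable s \<and>
        (\<forall>m n. s m > 0 \<longrightarrow> s n > 0 \<longrightarrow> u m \<bullet> u n = (if m = n then 1 else 0)) \<and>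
        (\<forall>m n. s m > 0 \<longrightarrow> s n > 0 \<longrightarrow> w m \<bullet> w n = (if m = n then 1 else 0)) \<and>
        (\<forall>v. (\<lambda>n. (s n * (u n \<bullet> v)) *\<^sub>R w n) sums T v))"

text \<open>n-th bit (n \<ge> 1, n = 1 the least significant bit) of k.\<close>
definition bitb :: "nat \<Rightarrow> nat \<Rightarrow> real" where
  "bitb k n = real ((k div 2 ^ (n - 1)) mod 2)"

definition fk :: "(nat \<Rightarrow> 'v::real_inner) \<Rightarrow> nat \<Rightarrow> 'v \<Rightarrow> 'v" where
  "fk e k v = (\<Sum>n. bitb k (Suc n) * (e (Suc n) \<bullet> v)) *\<^sub>R e k"

definition Fcl :: "(nat \<Rightarrow> 'v::real_inner) \<Rightarrow> ('v \<Rightarrow> 'v) set" where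
  "Fcl e = insert (\<lambda>_. 0) (fk e ` {1..})"

definition Xset :: "(nat \<Rightarrow> 'v::real_inner) \<Rightarrow> 'v set" where
  "Xset e = {v. \<exists>c::nat \<Rightarrow> real. (\<lambda>n. c (Suc n) *\<^sub>R e (Suc n)) sums v
                 \<and> summable (\<lambda>n. \<bar>c (Suc n)\<bar>) \<and> (\<Sum>n. \<bar>c (Suc n)\<bar>) \<le> 1}"

definition Yset :: "'v::real_normed_vector set" where
  "Yset = {v. norm v \<le> 1}"

definition risk :: "('v \<times> 'v) measure \<Rightarrow> ('v \<Rightarrow> 'v::real_normed_vector) \<Rightarrow> real" where
  "risk D g = (\<integral>z. (norm (g (fst z) - snd z))\<^sup>2 \<partial>D)"

definition dists :: "(nat \<Rightarrow> 'v::{real_inner,second_countable_topology}) \<Rightarrow> ('v \<times> 'v) measure set" where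
  "dists e = {D. sets D = sets (borel :: ('v \<times> 'v) measure) \<and> prob_space D
                 \<and> (AE z in D. z \<in> Xset e \<times> Yset)}"

definition rules :: "(nat \<Rightarrow> 'v::{real_inner,second_countable_topology}) \<Rightarrow> nat
     \<Rightarrow> ((nat \<Rightarrow> 'v \<times> 'v) \<Rightarrow> 'v \<Rightarrow> 'v) set" where
  "rules e n = {h. (\<lambda>p. h (fst p) (snd p)) \<in>
                      borel_measurable (PiM {..<n} (\<lambda>_. borel) \<Otimes>\<^sub>M borel)
                 \<and> (\<forall>S x. x \<in> Xset e \<longrightarrow> h S x \<in> Yset)}"

definition minimax :: "(nat \<Rightarrow> 'v::{real_inner,second_countable_topology}) \<Rightarrow> nat \<Rightarrow> real" where
  "minimax e n = (INF h\<in>rules e n. SUP D\<in>dists e.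
      \<integral>S. (risk D (h S) - (INF f\<in>Fcl e. risk D f)) \<partial>(PiM {..<n} (\<lambda>_. D)))"

definition rad_sup :: "(nat \<Rightarrow> 'v::real_inner) \<Rightarrow> nat \<Rightarrow> (nat \<Rightarrow> 'v) \<Rightarrow> (nat \<Rightarrow> 'v) \<Rightarrow> real" where
  "rad_sup e T x y = (\<Sum>\<sigma>\<in>PiE {1..T} (\<lambda>_. {-1, 1::real}).
        (SUP f\<in>Fcl e. \<Sum>t=1..T. \<sigma> t * (norm (f (x t) - y t))\<^sup>2)) / 2 ^ T"

end

theory Submission
  imports Defs "HOL-Real_Asymp.Real_Asymp"
begin

(* The bits of k encode any sign pattern: f_k(e_t) has squared norm b_k[t], so for the
   sample x_t = e_t, y_t = 0 and every sign vector some f_k collects all positive signs, and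
   the expected supremum is at least the expected number of positive signs, T/2.

   Learnability: on X \<times> Y the risk of f_k is R(0) - g_k, where the gain g_k is at most the
   energy mu_k = E <e_k, y>^2 and, by Bessel's inequality, the energies sum to at most 1.
   The rule estimates the energies on one half of the sample, keeps the finitely many indices
   with estimated energy at least tau, and picks the one with the largest gain estimated on
   the other half. Weighting the squared gain errors by the estimated energies gives a total
   with expectation O(1/m), so every kept index has gain error O(sqrt(1/(m tau))), while by
   Chebyshev a discarded index costs at most 2 tau + 4/m in expectation. With
   tau = m^(-1/4) the minimax excess risk tends to 0. *)

section \<open>The class and its sign patterns\<close>

definition bit_vector :: "(nat \<Rightarrow> 'v::real_inner) \<Rightarrow> nat \<Rightarrow> 'v" where
  "bit_vector e k = (\<Sum>n<k. bitb k (Suc n) *\<^sub>R e (Suc n))"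

lemma bitb_cases: "bitb k n = 0 \<or> bitb k n = 1"
  unfolding bitb_def by auto

lemma bitb_nonneg: "0 \<le> bitb k n" and bitb_le_one: "bitb k n \<le> 1"
  using bitb_cases[of k n] by auto

lemma bitb_squared: "(bitb k n)\<^sup>2 = bitb k n"
  using bitb_cases[of k n] by auto

lemma bitb_eq_0_if_le: "k \<le> n \<Longrightarrow> bitb k (Suc n) = 0"
proof -
  assume "k \<le> n"
  have "k < 2 ^ k" by (rule less_exp)
  also have "(2::nat) ^ k \<le> 2 ^ n" using \<open>k \<le> n\<close> by (simp add: power_increasing)
  finally have "k div 2 ^ n = 0" by simp
  then show ?thesis unfolding bitb_def by simp
qed

lemma bitb_0 [simp]: "bitb 0 n = 0"
  by (simp add: bitb_def)

lemma bitb_horner_sum: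
  "1 \<le> t \<Longrightarrow> bitb (horner_sum of_bool 2 bs) t = of_bool (t - 1 < length bs \<and> bs ! (t - 1))"
proof -
  assume t: "1 \<le> t"
  have "bit (horner_sum of_bool 2 bs :: nat) (t - 1) = (t - 1 < length bs \<and> bs ! (t - 1))"
    by (simp add: bit_horner_sum_bit_iff)
  moreover have "((horner_sum of_bool 2 bs :: nat) div 2 ^ (t - 1)) mod 2
      = of_bool (bit (horner_sum of_bool 2 bs :: nat) (t - 1))"
    by (simp add: bit_iff_odd mod_2_eq_odd)
  ultimately show ?thesis unfolding bitb_def by simp
qed

lemma fk_eq: "fk e k x = (bit_vector e k \<bullet> x) *\<^sub>R e k"
proof -
  have "(\<Sum>n. bitb k (Suc n) * (e (Suc n) \<bullet> x)) = (\<Sum>n<k. bitb k (Suc n) * (e (Suc n) \<bullet> x))"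
    by (rule suminf_finite) (auto simp: bitb_eq_0_if_le)
  then show ?thesis unfolding fk_def bit_vector_def by (simp add: inner_sum_left)
qed

lemma bit_vector_0 [simp]: "bit_vector e 0 = 0"
  by (simp add: bit_vector_def)

lemma fk_0: "fk e 0 = (\<lambda>_. 0)"
  by (simp add: fun_eq_iff fk_eq)

lemma Fcl_eq_range: "Fcl e = range (fk e)"
proof -
  have "UNIV = insert 0 {1::nat..}" by auto
  then have "range (fk e) = insert (fk e 0) (fk e ` {1..})" by (metis image_insert)
  then show ?thesis unfolding Fcl_def fk_0 by simp
qed

lemma compact_op_rank_one:
  fixes a c :: "'v::real_inner"
  shows "compact_op (\<lambda>v. (a \<bullet> v) *\<^sub>R c)"
proof -
  let ?T = "\<lambda>v. (a \<bullet> v) *\<^sub>R c"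
  define K where "K = (\<lambda>t. t *\<^sub>R c) ` {-norm a..norm a}"
  have "compact K" unfolding K_def
    by (intro compact_continuous_image continuous_intros) auto
  have "?T ` cball 0 1 \<subseteq> K"
  proof
    fix z assume "z \<in> ?T ` cball 0 1"
    then obtain v where v: "norm v \<le> 1" "z = ?T v" by auto
    have "\<bar>a \<bullet> v\<bar> \<le> norm a * norm v" by (rule Cauchy_Schwarz_ineq2)
    also have "\<dots> \<le> norm a" using v(1) by (simp add: mult_left_le)
    finally have "a \<bullet> v \<in> {-norm a..norm a}" by auto
    then show "z \<in> K" unfolding K_def using v by (intro image_eqI[of _ _ "a \<bullet> v"]) auto
  qed
  then have "closure (?T ` cball 0 1) \<subseteq> K"
    by (rule closure_minimal[OF _ compact_imp_closed[OF \<open>compact K\<close>]])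
  then have "compact (closure (?T ` cball 0 1))"
    using compact_Int_closed[OF \<open>compact K\<close> closed_closure, of "?T ` cball 0 1"]
    by (simp add: Int_absorb1)
  moreover have "bounded_linear ?T"
    by (intro bounded_linear_scaleR_left[THEN bounded_linear_compose] bounded_linear_inner_right)
  ultimately show ?thesis unfolding compact_op_def by simp
qed

lemma trace_class_rank_one:
  fixes a c :: "'v::real_inner"
  assumes "a = 0 \<or> c \<bullet> c = 1"
  shows "trace_class (\<lambda>v. (a \<bullet> v) *\<^sub>R c)"
proof -
  let ?T = "\<lambda>v. (a \<bullet> v) *\<^sub>R c"
  define s where "s = (\<lambda>n::nat. if n = 0 then norm a else 0)"
  define u where "u = (\<lambda>n::nat. a /\<^sub>R norm a)"
  define w where "w = (\<lambda>n::nat. c)"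
  have "(\<forall>n. s n \<ge> 0) \<and> summable s \<and>
        (\<forall>m n. s m > 0 \<longrightarrow> s n > 0 \<longrightarrow> u m \<bullet> u n = (if m = n then 1 else 0)) \<and>
        (\<forall>m n. s m > 0 \<longrightarrow> s n > 0 \<longrightarrow> w m \<bullet> w n = (if m = n then 1 else 0)) \<and>
        (\<forall>v. (\<lambda>n. (s n * (u n \<bullet> v)) *\<^sub>R w n) sums ?T v)"
  proof (intro conjI allI impI)
    show "summable s" unfolding s_def by (rule summable_single)
  next
    fix m n assume "0 < s m" "0 < s n"
    then have "m = 0" "n = 0" "a \<noteq> 0" unfolding s_def by (auto split: if_splits)
    then show "u m \<bullet> u n = (if m = n then 1 else 0)"
      by (simp add: u_def power2_norm_eq_inner[symmetric] power2_eq_square)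
    show "w m \<bullet> w n = (if m = n then 1 else 0)" using assms \<open>m = 0\<close> \<open>n = 0\<close> \<open>a \<noteq> 0\<close> by (simp add: w_def)
  next
    fix v
    have "(\<lambda>n. (s n * (u n \<bullet> v)) *\<^sub>R w n) = (\<lambda>n. if n = 0 then ?T v else 0)"
      unfolding s_def u_def w_def by (cases "a = 0") (auto simp: fun_eq_iff)
    then show "(\<lambda>n. (s n * (u n \<bullet> v)) *\<^sub>R w n) sums ?T v"
      using sums_single[of 0 "\<lambda>_. ?T v"] by simp
  qed (auto simp: s_def)
  then show ?thesis unfolding trace_class_def using compact_op_rank_one by blast
qed

lemma sum_signs_count_positive:
  "(\<Sum>\<sigma>\<in>PiE {1..T} (\<lambda>_. {-1, 1::real}). \<Sum>t=1..T. of_bool (\<sigma> t = 1)) = 2 ^ T * real T / 2"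
proof -
  define Sg where "Sg = PiE {1..T} (\<lambda>_. {-1, 1::real})"
  define P where "P = (\<lambda>\<sigma>::nat\<Rightarrow>real. \<Sum>t=1..T. of_bool (\<sigma> t = 1) :: real)"
  define neg where "neg = (\<lambda>\<sigma>::nat\<Rightarrow>real. restrict (\<lambda>t. - \<sigma> t) {1..T})"
  have negS: "neg \<sigma> \<in> Sg" if "\<sigma> \<in> Sg" for \<sigma> using that unfolding Sg_def neg_def by auto
  have negneg: "neg (neg \<sigma>) = \<sigma>" if "\<sigma> \<in> Sg" for \<sigma>
    using that unfolding Sg_def neg_def by (auto simp: fun_eq_iff PiE_def extensional_def)
  have "bij_betw neg Sg Sg"
    by (rule bij_betwI[of _ _ _ neg]) (auto simp: negS negneg)
  then have flip: "(\<Sum>\<sigma>\<in>Sg. P (neg \<sigma>)) = (\<Sum>\<sigma>\<in>Sg. P \<sigma>)"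
    by (rule sum.reindex_bij_betw)
  have "P \<sigma> + P (neg \<sigma>) = real T" if "\<sigma> \<in> Sg" for \<sigma>
  proof -
    have "P \<sigma> + P (neg \<sigma>) = (\<Sum>t=1..T. (1::real))" unfolding P_def sum.distrib[symmetric]
    proof (rule sum.cong)
      fix t assume "t \<in> {1..T}"
      then show "of_bool (\<sigma> t = 1) + of_bool (neg \<sigma> t = 1) = (1::real)"
        using that unfolding Sg_def neg_def by auto
    qed simp
    then show ?thesis by simp
  qed
  then have "(\<Sum>\<sigma>\<in>Sg. P \<sigma>) + (\<Sum>\<sigma>\<in>Sg. P (neg \<sigma>)) = real (card Sg) * real T"
    by (simp add: sum.distrib[symmetric])
  moreover have "card Sg = 2 ^ T"
    unfolding Sg_def by (simp add: card_PiE numeral_2_eq_2)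
  ultimately have "2 * (\<Sum>\<sigma>\<in>Sg. P \<sigma>) = 2 ^ T * real T" using flip by simp
  then show ?thesis unfolding Sg_def P_def by simp
qed

locale onb_space =
  fixes e :: "nat \<Rightarrow> 'v::{real_inner, complete_space, second_countable_topology}"
  assumes onb: "onb e"
begin

lemma inner_basis: "1 \<le> m \<Longrightarrow> 1 \<le> n \<Longrightarrow> e m \<bullet> e n = (if m = n then 1 else 0)"
  using onb unfolding onb_def by blast

lemma norm_basis: "1 \<le> m \<Longrightarrow> norm (e m) = 1"
  using inner_basis[of m m] by (simp add: norm_eq_sqrt_inner)

lemma inner_basis_sums:
  assumes "(\<lambda>n. c (Suc n) *\<^sub>R e (Suc n)) sums x" and "1 \<le> m"
  shows "e m \<bullet> x = c m"
proof -
  have "(\<lambda>n. e m \<bullet> (c (Suc n) *\<^sub>R e (Suc n))) sums (e m \<bullet> x)"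
    by (rule bounded_linear.sums[OF bounded_linear_inner_right assms(1)])
  moreover have "(\<lambda>n. e m \<bullet> (c (Suc n) *\<^sub>R e (Suc n))) = (\<lambda>n. if n = m - 1 then c m else 0)"
    using assms(2) by (auto simp: inner_basis fun_eq_iff)
  ultimately show ?thesis
    using sums_single[of "m - 1" "\<lambda>_. c m"] sums_unique2 by metis
qed

lemma inner_bit_vector_basis: "1 \<le> t \<Longrightarrow> bit_vector e k \<bullet> e t = bitb k t"
proof -
  assume t: "1 \<le> t"
  have "bit_vector e k \<bullet> e t = (\<Sum>n<k. if n = t - 1 then bitb k t else 0)"
    unfolding bit_vector_def inner_sum_left using t by (intro sum.cong) (auto simp: inner_basis)
  also have "\<dots> = bitb k t"
    using t bitb_eq_0_if_le[of k "t - 1"] by auto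
  finally show ?thesis .
qed

lemma abs_inner_bit_vector_Xset:
  assumes "x \<in> Xset e" shows "\<bar>bit_vector e k \<bullet> x\<bar> \<le> 1"
proof -
  obtain c where s: "(\<lambda>n. c (Suc n) *\<^sub>R e (Suc n)) sums x"
    and sm: "summable (\<lambda>n. \<bar>c (Suc n)\<bar>)" and le: "(\<Sum>n. \<bar>c (Suc n)\<bar>) \<le> 1"
    using assms unfolding Xset_def by blast
  have "bit_vector e k \<bullet> x = (\<Sum>n<k. bitb k (Suc n) * c (Suc n))"
    unfolding bit_vector_def inner_sum_left using inner_basis_sums[OF s] by simp
  then have "\<bar>bit_vector e k \<bullet> x\<bar> \<le> (\<Sum>n<k. \<bar>c (Suc n)\<bar>)"
    using sum_abs[of "\<lambda>n. bitb k (Suc n) * c (Suc n)" "{..<k}"]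
      sum_mono[of "{..<k}" "\<lambda>n. \<bar>bitb k (Suc n) * c (Suc n)\<bar>" "\<lambda>n. \<bar>c (Suc n)\<bar>"]
    by (auto simp: abs_mult bitb_nonneg bitb_le_one mult_left_le_one_le)
  also have "\<dots> \<le> (\<Sum>n. \<bar>c (Suc n)\<bar>)"
    by (rule sum_le_suminf[OF sm]) auto
  finally show ?thesis using le by simp
qed

lemma basis_in_Xset: "1 \<le> t \<Longrightarrow> e t \<in> Xset e"
proof -
  assume t: "1 \<le> t"
  define c where "c = (\<lambda>n::nat. if n = t then 1 else (0::real))"
  have "(\<lambda>n. c (Suc n) *\<^sub>R e (Suc n)) = (\<lambda>n. if n = t - 1 then e t else 0)"
    "(\<lambda>n. \<bar>c (Suc n)\<bar>) = (\<lambda>n. if n = t - 1 then 1 else 0)"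
    using t by (auto simp: c_def fun_eq_iff)
  then have "(\<lambda>n. c (Suc n) *\<^sub>R e (Suc n)) sums e t" "(\<lambda>n. \<bar>c (Suc n)\<bar>) sums 1"
    using sums_single[of "t - 1" "\<lambda>_. e t"] sums_single[of "t - 1" "\<lambda>_. 1::real"] by simp_all
  then show ?thesis unfolding Xset_def by (auto simp: sums_iff)
qed

lemma fk_in_Yset: "x \<in> Xset e \<Longrightarrow> fk e k x \<in> Yset"
  using abs_inner_bit_vector_Xset[of x k] norm_basis[of k]
  by (cases "k = 0") (auto simp: Yset_def fk_eq)

lemma bessel_inequality:
  assumes "finite F" "F \<subseteq> {1..}"
  shows "(\<Sum>k\<in>F. (e k \<bullet> y)\<^sup>2) \<le> (norm y)\<^sup>2"
proof -
  define p where "p = (\<Sum>k\<in>F. (e k \<bullet> y) *\<^sub>R e k)"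
  have ek: "e j \<bullet> p = e j \<bullet> y" if "j \<in> F" for j
  proof -
    have "e j \<bullet> p = (\<Sum>k\<in>F. (e k \<bullet> y) * (e j \<bullet> e k))"
      unfolding p_def by (simp add: inner_sum_right)
    also have "\<dots> = (\<Sum>k\<in>F. if k = j then e j \<bullet> y else 0)"
      using assms that by (intro sum.cong) (auto simp: inner_basis subset_iff)
    finally show ?thesis using assms(1) that by simp
  qed
  have "p \<bullet> p = (\<Sum>k\<in>F. (e k \<bullet> y)\<^sup>2)"
    by (subst (1) p_def) (simp add: inner_sum_left ek power2_eq_square)
  moreover have "y \<bullet> p = (\<Sum>k\<in>F. (e k \<bullet> y)\<^sup>2)"
    unfolding p_def by (simp add: inner_sum_right power2_eq_square inner_commute)
  moreover have "0 \<le> (y - p) \<bullet> (y - p)" by simp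
  ultimately show ?thesis by (simp add: power2_norm_eq_inner inner_diff inner_commute)
qed

lemma Fcl_trace_class: "Fcl e \<subseteq> {T. trace_class T}"
proof -
  have "trace_class (fk e k)" for k
  proof -
    have "fk e k = (\<lambda>v. (bit_vector e k \<bullet> v) *\<^sub>R e k)" by (simp add: fun_eq_iff fk_eq)
    moreover have "bit_vector e k = 0 \<or> e k \<bullet> e k = 1"
      using inner_basis[of k k] by (cases "k = 0") auto
    ultimately show ?thesis using trace_class_rank_one by metis
  qed
  then show ?thesis unfolding Fcl_eq_range by auto
qed

lemma loss_fk_basis: "1 \<le> t \<Longrightarrow> (norm (fk e k (e t)))\<^sup>2 = bitb k t"
  using norm_basis[of k] by (cases "k = 0") (simp_all add: fk_eq inner_bit_vector_basis bitb_squared)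

lemma SUP_Fcl_ge_count_positive:
  assumes \<sigma>: "\<sigma> \<in> PiE {1..T} (\<lambda>_. {-1, 1::real})"
  shows "(\<Sum>t=1..T. of_bool (\<sigma> t = 1)) \<le> (SUP f\<in>Fcl e. \<Sum>t=1..T. \<sigma> t * (norm (f (e t) - 0))\<^sup>2)"
proof -
  have "(\<Sum>t=1..T. \<sigma> t * (norm (fk e k (e t) - 0))\<^sup>2) \<le> real T" for k
  proof -
    have "\<sigma> t * bitb k t \<le> 1" if "t \<in> {1..T}" for t
    proof -
      have "\<sigma> t = -1 \<or> \<sigma> t = 1" using that \<sigma> by auto
      then show ?thesis using bitb_nonneg[of k t] bitb_le_one[of k t] by auto
    qed
    then have "(\<Sum>t=1..T. \<sigma> t * (norm (fk e k (e t) - 0))\<^sup>2) \<le> (\<Sum>t=1..T. 1)"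
      by (intro sum_mono) (simp add: loss_fk_basis)
    then show ?thesis by simp
  qed
  then have bdd: "bdd_above ((\<lambda>f. \<Sum>t=1..T. \<sigma> t * (norm (f (e t) - 0))\<^sup>2) ` Fcl e)"
    unfolding Fcl_eq_range by (intro bdd_aboveI2) auto
  define k where "k = (horner_sum of_bool 2 (map (\<lambda>i. \<sigma> (Suc i) = 1) [0..<T]) :: nat)"
  have "bitb k t = of_bool (\<sigma> t = 1)" if "t \<in> {1..T}" for t
    using that unfolding k_def by (subst bitb_horner_sum) auto
  then have "(\<Sum>t=1..T. \<sigma> t * (norm (fk e k (e t) - 0))\<^sup>2) = (\<Sum>t=1..T. of_bool (\<sigma> t = 1))"
    by (intro sum.cong) (auto simp: loss_fk_basis)
  then show ?thesis
    using cSUP_upper[OF _ bdd, of "fk e k"] by (simp add: Fcl_eq_range)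
qed

lemma rad_sup_basis_ge: "rad_sup e T e (\<lambda>_. 0) \<ge> real T / 2"
proof -
  have "2 ^ T * real T / 2 \<le> (\<Sum>\<sigma>\<in>PiE {1..T} (\<lambda>_. {-1, 1::real}).
          SUP f\<in>Fcl e. \<Sum>t=1..T. \<sigma> t * (norm (f (e t) - 0))\<^sup>2)"
    unfolding sum_signs_count_positive[symmetric] by (intro sum_mono SUP_Fcl_ge_count_positive)
  then show ?thesis unfolding rad_sup_def by (simp add: le_divide_eq mult.commute)
qed

end

section \<open>Averages of independent samples\<close>

lemma abs_power2_le: "\<bar>x::real\<bar> \<le> B \<Longrightarrow> \<bar>x\<^sup>2\<bar> \<le> B\<^sup>2"
  using power_mono[of "\<bar>x\<bar>" B 2] by simp

lemma (in prob_space) integrable_bounded: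
  fixes f :: "'a \<Rightarrow> real"
  assumes "f \<in> borel_measurable M" "\<And>x. \<bar>f x\<bar> \<le> B"
  shows "integrable M f"
  using assms by (intro integrable_const_bound[of _ B]) auto

lemma (in prob_space) integral_le_if_AE_le:
  fixes f :: "'a \<Rightarrow> real"
  assumes "AE x in M. f x \<le> B" "0 \<le> B"
  shows "integral\<^sup>L M f \<le> B"
proof (cases "integrable M f")
  case True
  have "integral\<^sup>L M f \<le> (\<integral>x. B \<partial>M)"
    by (rule integral_mono_AE[OF True _ assms(1)]) simp
  then show ?thesis by (simp add: prob_space)
next
  case False
  then show ?thesis using assms(2) by (simp add: not_integrable_integral_eq)
qed

lemma (in prob_space) abs_integral_le_bound:
  fixes f :: "'a \<Rightarrow> real"
  assumes "\<And>x. \<bar>f x\<bar> \<le> B"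
  shows "\<bar>\<integral>x. f x \<partial>M\<bar> \<le> B"
proof -
  have "0 \<le> B" using assms[of undefined] by simp
  then have "(\<integral>x. \<bar>f x\<bar> \<partial>M) \<le> B" using assms by (intro integral_le_if_AE_le) auto
  then show ?thesis using integral_abs_bound[of M f] by linarith
qed

lemma (in prob_space) integral_sq_centered:
  fixes W :: "'a \<Rightarrow> real"
  assumes "W \<in> borel_measurable M" "\<And>x. \<bar>W x\<bar> \<le> B"
  shows "(\<integral>x. W x - (\<integral>y. W y \<partial>M) \<partial>M) = 0"
    "(\<integral>x. (W x - (\<integral>y. W y \<partial>M))\<^sup>2 \<partial>M) = (\<integral>x. (W x)\<^sup>2 \<partial>M) - (\<integral>y. W y \<partial>M)\<^sup>2"
proof -
  define \<mu> where "\<mu> = (\<integral>y. W y \<partial>M)"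
  have iW: "integrable M W" using assms by (rule integrable_bounded)
  have "(\<lambda>x. (W x)\<^sup>2) \<in> borel_measurable M" "\<And>x. \<bar>(W x)\<^sup>2\<bar> \<le> B\<^sup>2"
    using assms abs_power2_le by auto
  then have iW2: "integrable M (\<lambda>x. (W x)\<^sup>2)" by (rule integrable_bounded)
  show "(\<integral>x. W x - \<mu> \<partial>M) = 0" using iW prob_space by (simp add: \<mu>_def)
  have "(\<lambda>x. (W x - \<mu>)\<^sup>2) = (\<lambda>x. (W x)\<^sup>2 - 2 * \<mu> * W x + \<mu>\<^sup>2)"
    by (auto simp: power2_eq_square algebra_simps)
  then show "(\<integral>x. (W x - \<mu>)\<^sup>2 \<partial>M) = (\<integral>x. (W x)\<^sup>2 \<partial>M) - \<mu>\<^sup>2"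
    using iW iW2 prob_space by (simp add: \<mu>_def power2_eq_square)
qed

lemma sqrt_le_add_divide:
  fixes a \<rho> :: real
  assumes "0 \<le> a" "0 < \<rho>"
  shows "sqrt a \<le> \<rho> + a / \<rho>"
proof (cases "sqrt a \<le> \<rho>")
  case True
  then show ?thesis using assms by (simp add: add_increasing2)
next
  case False
  then have "sqrt a * \<rho> \<le> sqrt a * sqrt a" using assms by (intro mult_left_mono) auto
  then have "sqrt a \<le> a / \<rho>" using assms by (simp add: field_simps del: real_sqrt_le_iff)
  then show ?thesis using assms by linarith
qed

lemma (in prob_space) integral_sqrt_le:
  fixes \<Phi> :: "'a \<Rightarrow> real"
  assumes \<Phi>: "integrable M \<Phi>" "\<And>x. 0 \<le> \<Phi> x" "(\<integral>x. \<Phi> x \<partial>M) \<le> c"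
    and "0 < \<tau>" "0 < \<rho>"
  shows "integrable M (\<lambda>x. sqrt (\<Phi> x / \<tau>))"
    "(\<integral>x. sqrt (\<Phi> x / \<tau>) \<partial>M) \<le> \<rho> + c / (\<tau> * \<rho>)"
proof -
  have pt: "sqrt (\<Phi> x / \<tau>) \<le> \<rho> + \<Phi> x / (\<tau> * \<rho>)" for x
    using sqrt_le_add_divide[of "\<Phi> x / \<tau>" \<rho>] assms by (simp add: field_simps)
  have ib: "integrable M (\<lambda>x. \<rho> + \<Phi> x / (\<tau> * \<rho>))"
    using \<Phi>(1) by simp
  show int: "integrable M (\<lambda>x. sqrt (\<Phi> x / \<tau>))"
  proof (rule Bochner_Integration.integrable_bound[OF ib])
    show "(\<lambda>x. sqrt (\<Phi> x / \<tau>)) \<in> borel_measurable M"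
      using borel_measurable_integrable[OF \<Phi>(1)] by measurable
    show "AE x in M. norm (sqrt (\<Phi> x / \<tau>)) \<le> norm (\<rho> + \<Phi> x / (\<tau> * \<rho>))"
      using pt assms by (auto intro!: AE_I2 order_trans[OF _ abs_ge_self])
  qed
  have "(\<integral>x. sqrt (\<Phi> x / \<tau>) \<partial>M) \<le> (\<integral>x. \<rho> + \<Phi> x / (\<tau> * \<rho>) \<partial>M)"
    by (rule integral_mono[OF int ib pt])
  also have "\<dots> = \<rho> + (\<integral>x. \<Phi> x \<partial>M) / (\<tau> * \<rho>)"
    using \<Phi>(1) by (simp add: prob_space)
  also have "\<dots> \<le> \<rho> + c / (\<tau> * \<rho>)"
    using \<Phi>(3) assms by (intro add_left_mono divide_right_mono) auto
  finally show "(\<integral>x. sqrt (\<Phi> x / \<tau>) \<partial>M) \<le> \<rho> + c / (\<tau> * \<rho>)" .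
qed

lemma if_less_le_scaled_sq_dev:
  fixes x \<mu> \<tau> G :: real
  assumes "0 \<le> G" "\<tau> < \<mu>"
  shows "(if x < \<tau> then G else 0) \<le> G / (\<mu> - \<tau>)\<^sup>2 * (x - \<mu>)\<^sup>2"
proof (cases "x < \<tau>")
  case True
  then have "(\<mu> - \<tau>)\<^sup>2 \<le> (x - \<mu>)\<^sup>2"
    using assms by (simp add: power_mono power2_commute)
  then have "G * 1 \<le> G * ((x - \<mu>)\<^sup>2 / (\<mu> - \<tau>)\<^sup>2)"
    using assms by (intro mult_left_mono) auto
  then show ?thesis using True by simp
qed (use assms in simp)

text \<open>Chebyshev: once \<open>\<mu> > 2 * \<tau>\<close>, the event \<open>X < \<tau>\<close> forces \<open>\<bar>X - \<mu>\<bar> \<ge> \<mu> / 2\<close>.\<close>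
lemma (in prob_space) threshold_loss_le:
  fixes X :: "'a \<Rightarrow> real"
  assumes X: "X \<in> borel_measurable M" "\<And>x. \<bar>X x - \<mu>\<bar> \<le> 1"
    and var: "(\<integral>x. (X x - \<mu>)\<^sup>2 \<partial>M) \<le> \<mu> / m"
    and G: "0 \<le> G" "G \<le> \<mu>" and \<tau>: "0 < \<tau>" and m: "0 < m"
  shows "(\<integral>x. (if X x < \<tau> then G else 0) \<partial>M) \<le> 2 * \<tau> + 4 / m"
proof (cases "\<mu> \<le> 2 * \<tau>")
  case True
  then have "(\<integral>x. (if X x < \<tau> then G else 0) \<partial>M) \<le> 2 * \<tau>"
    using G \<tau> by (intro integral_le_if_AE_le) auto
  then show ?thesis using m by (smt (verit) divide_pos_pos)
next
  case False
  then have pos: "0 < \<mu> - \<tau>" "\<mu> / 2 \<le> \<mu> - \<tau>" using \<tau> by auto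
  have "(\<lambda>x. (X x - \<mu>)\<^sup>2) \<in> borel_measurable M" "\<And>x. \<bar>(X x - \<mu>)\<^sup>2\<bar> \<le> 1"
    using X abs_power2_le[OF X(2)] by auto
  then have iv: "integrable M (\<lambda>x. (X x - \<mu>)\<^sup>2)" by (rule integrable_bounded)
  have pt: "(if X x < \<tau> then G else 0) \<le> G / (\<mu> - \<tau>)\<^sup>2 * (X x - \<mu>)\<^sup>2" for x
    using G pos by (intro if_less_le_scaled_sq_dev) auto
  have "(\<integral>x. (if X x < \<tau> then G else 0) \<partial>M) \<le> (\<integral>x. G / (\<mu> - \<tau>)\<^sup>2 * (X x - \<mu>)\<^sup>2 \<partial>M)"
  proof (rule integral_mono[OF _ _ pt])
    have "(\<lambda>x. if X x < \<tau> then G else 0) \<in> borel_measurable M" using X(1) by measurable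
    then show "integrable M (\<lambda>x. if X x < \<tau> then G else 0)"
      by (rule integrable_bounded[of _ G]) (use G in auto)
  qed (use iv in simp)
  also have "\<dots> = G / (\<mu> - \<tau>)\<^sup>2 * (\<integral>x. (X x - \<mu>)\<^sup>2 \<partial>M)" by simp
  also have "\<dots> \<le> \<mu> / (\<mu> / 2)\<^sup>2 * (\<mu> / m)"
  proof (intro mult_mono var)
    have "(\<mu> / 2)\<^sup>2 \<le> (\<mu> - \<tau>)\<^sup>2" using pos False \<tau> by (intro power_mono) auto
    then show "G / (\<mu> - \<tau>)\<^sup>2 \<le> \<mu> / (\<mu> / 2)\<^sup>2"
      using G pos False \<tau> by (intro frac_le) auto
  qed (use G pos False \<tau> in auto)
  also have "\<dots> = 4 / m" using False \<tau> by (simp add: power2_eq_square field_simps)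
  finally show ?thesis using \<tau> by simp
qed

lemma sum_times_square_sum:
  fixes f g :: "'b \<Rightarrow> 'c::comm_semiring_1"
  shows "(\<Sum>a\<in>A. f a) * (\<Sum>i\<in>I. g i)\<^sup>2 = (\<Sum>a\<in>A. \<Sum>i\<in>I. \<Sum>j\<in>I. f a * g i * g j)"
proof -
  have "(\<Sum>a\<in>A. f a) * (\<Sum>i\<in>I. g i)\<^sup>2 = (\<Sum>a\<in>A. f a) * (\<Sum>i\<in>I. \<Sum>j\<in>I. g i * g j)"
    by (simp only: power2_eq_square sum_product)
  also have "\<dots> = (\<Sum>a\<in>A. f a * (\<Sum>i\<in>I. \<Sum>j\<in>I. g i * g j))"
    by (rule sum_distrib_right)
  also have "\<dots> = (\<Sum>a\<in>A. \<Sum>i\<in>I. \<Sum>j\<in>I. f a * g i * g j)"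
    by (simp only: sum_distrib_left mult.assoc)
  finally show ?thesis .
qed

locale iid_sample = prob_space D for D :: "'a measure" +
  fixes n :: nat
begin

abbreviation sample_measure :: "(nat \<Rightarrow> 'a) measure" where
  "sample_measure \<equiv> PiM {..<n} (\<lambda>_. D)"

lemma prob_space_sample: "prob_space sample_measure"
  by (rule prob_space_PiM) (simp add: prob_space_axioms)

lemma integrable_sample_bounded:
  fixes f :: "(nat \<Rightarrow> 'a) \<Rightarrow> real"
  assumes "f \<in> borel_measurable sample_measure" "\<And>S. \<bar>f S\<bar> \<le> B"
  shows "integrable sample_measure f"
  using prob_space.integrable_bounded[OF prob_space_sample assms] .

lemma measurable_coord:
  "f \<in> borel_measurable D \<Longrightarrow> i < n \<Longrightarrow> (\<lambda>S. f (S i)) \<in> borel_measurable sample_measure"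
  by (rule measurable_compose[OF measurable_component_singleton]) auto

lemma integral_prod_coords:
  fixes F :: "nat \<Rightarrow> 'a \<Rightarrow> real"
  assumes J: "J \<subseteq> {..<n}" and F: "\<And>l. l \<in> J \<Longrightarrow> F l \<in> borel_measurable D"
    and B: "\<And>l x. l \<in> J \<Longrightarrow> \<bar>F l x\<bar> \<le> B"
  shows "(\<integral>S. (\<Prod>l\<in>J. F l (S l)) \<partial>sample_measure) = (\<Prod>l\<in>J. \<integral>x. F l x \<partial>D)"
proof -
  have PPS: "product_sigma_finite (\<lambda>_::nat. D)"
    unfolding product_sigma_finite_def by (simp add: sigma_finite_measure_axioms)
  define f where "f = (\<lambda>l. if l \<in> J then F l else (\<lambda>_. 1::real))"
  have "integrable D (f l)" for l
    using F B by (cases "l \<in> J") (auto simp: f_def intro!: integrable_bounded)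
  then have "(\<integral>S. (\<Prod>l\<in>{..<n}. f l (S l)) \<partial>sample_measure) = (\<Prod>l\<in>{..<n}. integral\<^sup>L D (f l))"
    by (intro product_sigma_finite.product_integral_prod[OF PPS]) auto
  moreover have "(\<lambda>S. \<Prod>l\<in>{..<n}. f l (S l)) = (\<lambda>S. \<Prod>l\<in>J. F l (S l))"
    using J by (intro ext prod.mono_neutral_cong_right) (auto simp: f_def)
  moreover have "(\<Prod>l\<in>{..<n}. integral\<^sup>L D (f l)) = (\<Prod>l\<in>J. \<integral>x. F l x \<partial>D)"
    using J by (intro prod.mono_neutral_cong_right) (auto simp: f_def prob_space)
  ultimately show ?thesis by simp
qed

lemma integral_coord_pair:
  fixes V :: "'a \<Rightarrow> real"
  assumes "i < n" "j < n" "V \<in> borel_measurable D" "\<And>x. \<bar>V x\<bar> \<le> B"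
  shows "(\<integral>S. V (S i) * V (S j) \<partial>sample_measure)
           = (if i = j then \<integral>x. (V x)\<^sup>2 \<partial>D else (\<integral>x. V x \<partial>D)\<^sup>2)"
proof (cases "i = j")
  case True
  have "(\<integral>S. (\<Prod>l\<in>{i}. (\<lambda>x. (V x)\<^sup>2) (S l)) \<partial>sample_measure) = (\<Prod>l\<in>{i}. \<integral>x. (V x)\<^sup>2 \<partial>D)"
    using assms abs_power2_le by (intro integral_prod_coords[of _ _ "B\<^sup>2"]) auto
  then show ?thesis using True by (simp add: power2_eq_square)
next
  case False
  have "(\<integral>S. (\<Prod>l\<in>{i,j}. V (S l)) \<partial>sample_measure) = (\<Prod>l\<in>{i,j}. \<integral>x. V x \<partial>D)"
    using assms by (intro integral_prod_coords[of _ _ B]) auto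
  then show ?thesis using False by (simp add: power2_eq_square)
qed

lemma integral_coord_triple:
  fixes A V :: "'a \<Rightarrow> real"
  assumes "a < n" "i < n" "j < n" "a \<noteq> i" "a \<noteq> j"
    "A \<in> borel_measurable D" "V \<in> borel_measurable D" "\<And>x. \<bar>A x\<bar> \<le> B" "\<And>x. \<bar>V x\<bar> \<le> B"
  shows "(\<integral>S. A (S a) * V (S i) * V (S j) \<partial>sample_measure)
           = (\<integral>x. A x \<partial>D) * (if i = j then \<integral>x. (V x)\<^sup>2 \<partial>D else (\<integral>x. V x \<partial>D)\<^sup>2)"
proof (cases "i = j")
  case True
  define H where "H = (\<lambda>l. if l = a then A else (\<lambda>x. (V x)\<^sup>2))"
  have "\<bar>H l x\<bar> \<le> B + B\<^sup>2" for l x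
    using assms(8,9)[of x] abs_power2_le[OF assms(9)[of x]] by (auto simp: H_def intro: add_increasing2)
  then have "(\<integral>S. (\<Prod>l\<in>{a,i}. H l (S l)) \<partial>sample_measure) = (\<Prod>l\<in>{a,i}. \<integral>x. H l x \<partial>D)"
    using assms by (intro integral_prod_coords[of _ _ "B + B\<^sup>2"]) (auto simp: H_def)
  then show ?thesis using assms True by (simp add: H_def power2_eq_square mult.assoc)
next
  case False
  define H where "H = (\<lambda>l. if l = a then A else V)"
  have "(\<integral>S. (\<Prod>l\<in>{a,i,j}. H l (S l)) \<partial>sample_measure) = (\<Prod>l\<in>{a,i,j}. \<integral>x. H l x \<partial>D)"
    using assms by (intro integral_prod_coords[of _ _ B]) (auto simp: H_def)
  then show ?thesis using assms False by (simp add: H_def power2_eq_square mult.assoc)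
qed

lemma variance_average:
  fixes V :: "'a \<Rightarrow> real"
  assumes V: "V \<in> borel_measurable D" "\<And>x. \<bar>V x\<bar> \<le> B" "(\<integral>x. V x \<partial>D) = 0"
    and I: "I \<subseteq> {..<n}" "card I = m" "0 < m"
  shows "(\<integral>S. ((\<Sum>i\<in>I. V (S i)) / m)\<^sup>2 \<partial>sample_measure) = (\<integral>x. (V x)\<^sup>2 \<partial>D) / m"
proof -
  have fin: "finite I" using I by (metis card_gt_0_iff)
  have sq: "((\<Sum>i\<in>I. V (S i)) / m)\<^sup>2 = (\<Sum>i\<in>I. \<Sum>j\<in>I. V (S i) * V (S j)) / (real m)\<^sup>2" for S
    by (simp add: power2_eq_square sum_product)
  have "integrable sample_measure (\<lambda>S. V (S i) * V (S j))" if "i \<in> I" "j \<in> I" for i j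
  proof (rule integrable_sample_bounded[of _ "B * B"])
    show "(\<lambda>S. V (S i) * V (S j)) \<in> borel_measurable sample_measure"
      using that I V by (auto intro!: borel_measurable_times measurable_coord)
    show "\<bar>V (S i) * V (S j)\<bar> \<le> B * B" for S
      using V(2)[of "S i"] V(2)[of "S j"] by (simp add: abs_mult mult_mono')
  qed
  then have "(\<integral>S. (\<Sum>i\<in>I. \<Sum>j\<in>I. V (S i) * V (S j)) \<partial>sample_measure)
      = (\<Sum>i\<in>I. \<Sum>j\<in>I. \<integral>S. V (S i) * V (S j) \<partial>sample_measure)"
    by (simp add: integral_sum integrable_sum)
  also have "\<dots> = (\<Sum>i\<in>I. \<Sum>j\<in>I. if i = j then \<integral>x. (V x)\<^sup>2 \<partial>D else 0)"
    using I V by (intro sum.cong refl) (auto simp: integral_coord_pair[of _ _ V B] subset_iff)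
  also have "\<dots> = m * (\<integral>x. (V x)\<^sup>2 \<partial>D)" using fin I by simp
  finally show ?thesis unfolding sq using I by (simp add: power2_eq_square)
qed

lemma weighted_variance_average:
  fixes A V :: "'a \<Rightarrow> real"
  assumes A: "A \<in> borel_measurable D" "\<And>x. \<bar>A x\<bar> \<le> B"
    and V: "V \<in> borel_measurable D" "\<And>x. \<bar>V x\<bar> \<le> B" "(\<integral>x. V x \<partial>D) = 0"
    and I: "I \<subseteq> {..<n}" "card I = m" "0 < m" "I' \<subseteq> {..<n}" "card I' = m" "I \<inter> I' = {}"
  shows "(\<integral>S. ((\<Sum>a\<in>I'. A (S a)) / m) * ((\<Sum>i\<in>I. V (S i)) / m)\<^sup>2 \<partial>sample_measure)
           = (\<integral>x. A x \<partial>D) * (\<integral>x. (V x)\<^sup>2 \<partial>D) / m"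
proof -
  have fin: "finite I" "finite I'" using I by (metis card_gt_0_iff)+
  have expand: "((\<Sum>a\<in>I'. A (S a)) / m) * ((\<Sum>i\<in>I. V (S i)) / m)\<^sup>2
      = (\<Sum>a\<in>I'. \<Sum>i\<in>I. \<Sum>j\<in>I. A (S a) * V (S i) * V (S j)) / (real m ^ 3)" for S
  proof -
    have "((\<Sum>a\<in>I'. A (S a)) / m) * ((\<Sum>i\<in>I. V (S i)) / m)\<^sup>2
        = (\<Sum>a\<in>I'. A (S a)) * (\<Sum>i\<in>I. V (S i))\<^sup>2 / (real m ^ 3)"
      by (simp add: power2_eq_square power3_eq_cube)
    then show ?thesis by (simp only: sum_times_square_sum)
  qed
  have "integrable sample_measure (\<lambda>S. A (S a) * V (S i) * V (S j))"
    if "a \<in> I'" "i \<in> I" "j \<in> I" for a i j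
  proof (rule integrable_sample_bounded[of _ "B * B * B"])
    show "(\<lambda>S. A (S a) * V (S i) * V (S j)) \<in> borel_measurable sample_measure"
      using that I A V by (auto intro!: borel_measurable_times measurable_coord)
    show "\<bar>A (S a) * V (S i) * V (S j)\<bar> \<le> B * B * B" for S
      using A(2)[of "S a"] V(2)[of "S i"] V(2)[of "S j"]
      by (simp add: abs_mult mult_mono' mult_nonneg_nonneg)
  qed
  then have "(\<integral>S. (\<Sum>a\<in>I'. \<Sum>i\<in>I. \<Sum>j\<in>I. A (S a) * V (S i) * V (S j)) \<partial>sample_measure)
      = (\<Sum>a\<in>I'. \<Sum>i\<in>I. \<Sum>j\<in>I. \<integral>S. A (S a) * V (S i) * V (S j) \<partial>sample_measure)"
    by (simp add: integral_sum integrable_sum)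
  also have "\<dots> = (\<Sum>a\<in>I'. \<Sum>i\<in>I. \<Sum>j\<in>I.
                       if i = j then (\<integral>x. A x \<partial>D) * (\<integral>x. (V x)\<^sup>2 \<partial>D) else 0)"
  proof (intro sum.cong refl)
    fix a i j assume "a \<in> I'" "i \<in> I" "j \<in> I"
    moreover have "a \<noteq> i" "a \<noteq> j" using I(6) calculation by auto
    ultimately show "(\<integral>S. A (S a) * V (S i) * V (S j) \<partial>sample_measure)
        = (if i = j then (\<integral>x. A x \<partial>D) * (\<integral>x. (V x)\<^sup>2 \<partial>D) else 0)"
      using I A V integral_coord_triple[of a i j A V B] by (auto simp: subset_iff)
  qed
  also have "\<dots> = m * (m * ((\<integral>x. A x \<partial>D) * (\<integral>x. (V x)\<^sup>2 \<partial>D)))" using fin I by simp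
  finally show ?thesis unfolding expand using I by (simp add: power3_eq_cube)
qed

lemma variance_average_le:
  fixes W :: "'a \<Rightarrow> real"
  assumes W: "W \<in> borel_measurable D" "\<And>x. \<bar>W x\<bar> \<le> B"
    and I: "I \<subseteq> {..<n}" "card I = m" "0 < m"
  shows "(\<integral>S. ((\<Sum>i\<in>I. W (S i)) / m - (\<integral>x. W x \<partial>D))\<^sup>2 \<partial>sample_measure)
           \<le> (\<integral>x. (W x)\<^sup>2 \<partial>D) / m"
proof -
  define \<mu> where "\<mu> = (\<integral>x. W x \<partial>D)"
  have "\<bar>W x - \<mu>\<bar> \<le> 2 * B" for x
    using W(2)[of x] abs_integral_le_bound[of W B, OF W(2)] unfolding \<mu>_def by linarith
  moreover have "(\<Sum>i\<in>I. W (S i)) / m - \<mu> = (\<Sum>i\<in>I. W (S i) - \<mu>) / m" for S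
    using I by (simp add: sum_subtractf field_simps)
  ultimately have "(\<integral>S. ((\<Sum>i\<in>I. W (S i)) / m - \<mu>)\<^sup>2 \<partial>sample_measure)
      = (\<integral>x. (W x - \<mu>)\<^sup>2 \<partial>D) / m"
    using W I integral_sq_centered[OF W] unfolding \<mu>_def[symmetric]
    by (simp add: variance_average[of "\<lambda>x. W x - \<mu>" "2 * B"])
  also have "\<dots> \<le> (\<integral>x. (W x)\<^sup>2 \<partial>D) / m"
    using integral_sq_centered[OF W] I unfolding \<mu>_def[symmetric] by (simp add: divide_right_mono)
  finally show ?thesis unfolding \<mu>_def .
qed

lemma weighted_variance_average_le:
  fixes A W :: "'a \<Rightarrow> real"
  assumes A: "A \<in> borel_measurable D" "\<And>x. 0 \<le> A x" "\<And>x. A x \<le> B"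
    and W: "W \<in> borel_measurable D" "\<And>x. \<bar>W x\<bar> \<le> B"
    and I: "I \<subseteq> {..<n}" "card I = m" "0 < m" "I' \<subseteq> {..<n}" "card I' = m" "I \<inter> I' = {}"
  shows "(\<integral>S. ((\<Sum>a\<in>I'. A (S a)) / m) * ((\<Sum>i\<in>I. W (S i)) / m - (\<integral>x. W x \<partial>D))\<^sup>2
            \<partial>sample_measure) \<le> (\<integral>x. A x \<partial>D) * (\<integral>x. (W x)\<^sup>2 \<partial>D) / m"
proof -
  define \<mu> where "\<mu> = (\<integral>x. W x \<partial>D)"
  have B: "\<bar>A x\<bar> \<le> 2 * B" "\<bar>W x - \<mu>\<bar> \<le> 2 * B" for x
    using A(2,3)[of x] W(2)[of x] abs_integral_le_bound[of W B, OF W(2)] unfolding \<mu>_def by auto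
  have "(\<Sum>i\<in>I. W (S i)) / m - \<mu> = (\<Sum>i\<in>I. W (S i) - \<mu>) / m" for S
    using I by (simp add: sum_subtractf field_simps)
  then have "(\<integral>S. ((\<Sum>a\<in>I'. A (S a)) / m) * ((\<Sum>i\<in>I. W (S i)) / m - \<mu>)\<^sup>2 \<partial>sample_measure)
      = (\<integral>S. ((\<Sum>a\<in>I'. A (S a)) / m) * ((\<Sum>i\<in>I. W (S i) - \<mu>) / m)\<^sup>2 \<partial>sample_measure)"
    by simp
  also have "\<dots> = (\<integral>x. A x \<partial>D) * (\<integral>x. (W x - \<mu>)\<^sup>2 \<partial>D) / m"
    using A W I B integral_sq_centered[OF W] unfolding \<mu>_def[symmetric]
    by (intro weighted_variance_average[of A "2 * B" "\<lambda>x. W x - \<mu>"]) auto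
  also have "\<dots> \<le> (\<integral>x. A x \<partial>D) * (\<integral>x. (W x)\<^sup>2 \<partial>D) / m"
    using integral_sq_centered[OF W] I A(2) unfolding \<mu>_def[symmetric]
    by (intro divide_right_mono mult_left_mono) auto
  finally show ?thesis unfolding \<mu>_def .
qed

end

section \<open>The learning rule\<close>

text \<open>The loss of \<open>fk e k\<close> at \<open>(x, y)\<close> is \<open>\<parallel>y\<parallel>\<^sup>2 - gain e k (x, y)\<close>. On \<open>Xset e \<times> Yset\<close> the
  truncations below are inactive; they only make the estimators bounded everywhere.\<close>
definition gain :: "(nat \<Rightarrow> 'v::real_inner) \<Rightarrow> nat \<Rightarrow> 'v \<times> 'v \<Rightarrow> real" where
  "gain e k z = 2 * (bit_vector e k \<bullet> fst z) * (e k \<bullet> snd z) - (bit_vector e k \<bullet> fst z)\<^sup>2"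

definition clipped_gain :: "(nat \<Rightarrow> 'v::real_inner) \<Rightarrow> nat \<Rightarrow> 'v \<times> 'v \<Rightarrow> real" where
  "clipped_gain e k z = max (-3) (min 3 (gain e k z))"

definition energy :: "(nat \<Rightarrow> 'v::real_inner) \<Rightarrow> nat \<Rightarrow> 'v \<times> 'v \<Rightarrow> real" where
  "energy e k z = min 1 ((e k \<bullet> snd z)\<^sup>2)"

text \<open>The learning rule: the first \<open>m\<close> sample points estimate the energies, the next \<open>m\<close> the
  gains; among the indices whose estimated energy reaches \<open>\<tau>\<close> (finitely many, by Bessel's
  inequality) and the index \<open>0\<close> of the zero predictor, it selects one of largest estimated gain.\<close>
definition energy_est :: "(nat \<Rightarrow> 'v::real_inner) \<Rightarrow> nat \<Rightarrow> nat \<Rightarrow> (nat \<Rightarrow> 'v \<times> 'v) \<Rightarrow> real" where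
  "energy_est e m k S = (\<Sum>i<m. energy e k (S i)) / m"

definition gain_est :: "(nat \<Rightarrow> 'v::real_inner) \<Rightarrow> nat \<Rightarrow> nat \<Rightarrow> (nat \<Rightarrow> 'v \<times> 'v) \<Rightarrow> real" where
  "gain_est e m k S = (\<Sum>i\<in>{m..<2*m}. clipped_gain e k (S i)) / m"

definition candidates :: "(nat \<Rightarrow> 'v::real_inner) \<Rightarrow> nat \<Rightarrow> real \<Rightarrow> (nat \<Rightarrow> 'v \<times> 'v) \<Rightarrow> nat set" where
  "candidates e m \<tau> S = insert 0 {k. 1 \<le> k \<and> \<tau> \<le> energy_est e m k S}"

definition selected :: "(nat \<Rightarrow> 'v::real_inner) \<Rightarrow> nat \<Rightarrow> real \<Rightarrow> (nat \<Rightarrow> 'v \<times> 'v) \<Rightarrow> nat" where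
  "selected e m \<tau> S = (LEAST k. k \<in> candidates e m \<tau> S
                         \<and> (\<forall>j\<in>candidates e m \<tau> S. gain_est e m j S \<le> gain_est e m k S))"

definition selection_rule :: "(nat \<Rightarrow> 'v::real_inner) \<Rightarrow> nat \<Rightarrow> real \<Rightarrow> (nat \<Rightarrow> 'v \<times> 'v) \<Rightarrow> 'v \<Rightarrow> 'v" where
  "selection_rule e m \<tau> S = fk e (selected e m \<tau> S)"

lemma energy_nonneg: "0 \<le> energy e k z" and energy_le_one: "energy e k z \<le> 1"
  unfolding energy_def by (simp_all add: min_def)

lemma abs_clipped_gain_le: "\<bar>clipped_gain e k z\<bar> \<le> 3"
  unfolding clipped_gain_def abs_le_iff by (simp add: min_def max_def)

lemma clipped_gain_0 [simp]: "clipped_gain e 0 z = 0"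
  by (simp add: clipped_gain_def gain_def)

lemma energy_est_nonneg: "0 \<le> energy_est e m k S"
  unfolding energy_est_def by (intro divide_nonneg_nonneg sum_nonneg) (auto simp: energy_nonneg)

lemma energy_est_le_one: "energy_est e m k S \<le> 1"
proof -
  have "(\<Sum>i<m. energy e k (S i)) \<le> (\<Sum>i<m. 1)" by (intro sum_mono) (auto simp: energy_le_one)
  then show ?thesis unfolding energy_est_def by (cases "m = 0") (simp_all add: divide_le_eq_1)
qed

lemma abs_gain_est_le: "\<bar>gain_est e m k S\<bar> \<le> 3"
proof (cases "m = 0")
  case False
  have "\<bar>\<Sum>i\<in>{m..<2*m}. clipped_gain e k (S i)\<bar> \<le> (\<Sum>i\<in>{m..<2*m}. 3)"
    by (rule order_trans[OF sum_abs sum_mono]) (auto simp: abs_clipped_gain_le)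
  then show ?thesis using False unfolding gain_est_def by (simp add: divide_le_eq mult.commute)
qed (simp add: gain_est_def)

lemma gain_est_0 [simp]: "gain_est e m 0 S = 0"
  by (simp add: gain_est_def)

lemma measurable_energy [measurable]: "energy e k \<in> borel_measurable borel"
  unfolding energy_def by (intro borel_measurable_continuous_onI continuous_intros)

lemma measurable_clipped_gain [measurable]: "clipped_gain e k \<in> borel_measurable borel"
  unfolding clipped_gain_def gain_def by (intro borel_measurable_continuous_onI continuous_intros)

lemma measurable_coord_borel:
  "f \<in> borel_measurable borel \<Longrightarrow> i \<in> I \<Longrightarrow> (\<lambda>S. f (S i)) \<in> borel_measurable (PiM I (\<lambda>_. borel))"
  by (rule measurable_compose[OF measurable_component_singleton])

lemma measurable_energy_est: "m \<le> n \<Longrightarrow> energy_est e m k \<in> borel_measurable (PiM {..<n} (\<lambda>_. borel))"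
  unfolding energy_est_def[abs_def]
  by (intro borel_measurable_divide borel_measurable_sum borel_measurable_const
        measurable_coord_borel measurable_energy) auto

lemma measurable_gain_est: "2 * m \<le> n \<Longrightarrow> gain_est e m k \<in> borel_measurable (PiM {..<n} (\<lambda>_. borel))"
  unfolding gain_est_def[abs_def]
  by (intro borel_measurable_divide borel_measurable_sum borel_measurable_const
        measurable_coord_borel measurable_clipped_gain) auto

lemma pred_le_real:
  "f \<in> borel_measurable M \<Longrightarrow> g \<in> borel_measurable M \<Longrightarrow> Measurable.pred M (\<lambda>x. (f x::real) \<le> g x)"
  unfolding pred_def using borel_measurable_le by blast

lemma measurable_selected:
  assumes "2 * m \<le> n"
  shows "selected e m \<tau> \<in> measurable (PiM {..<n} (\<lambda>_. borel)) (count_space UNIV)"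
  unfolding selected_def
proof (rule measurable_Least)
  fix k
  have M: "\<And>k. energy_est e m k \<in> borel_measurable (PiM {..<n} (\<lambda>_. borel))"
     "\<And>k. gain_est e m k \<in> borel_measurable (PiM {..<n} (\<lambda>_. borel))"
    using measurable_energy_est[of m n] measurable_gain_est[OF assms] assms by auto
  have "(\<lambda>S. k \<in> candidates e m \<tau> S \<and> (\<forall>j\<in>candidates e m \<tau> S. gain_est e m j S \<le> gain_est e m k S))
      = (\<lambda>S. (k = 0 \<or> (1 \<le> k \<and> \<tau> \<le> energy_est e m k S))
          \<and> (\<forall>j. j = 0 \<or> (1 \<le> j \<and> \<tau> \<le> energy_est e m j S) \<longrightarrow> gain_est e m j S \<le> gain_est e m k S))"
    by (auto simp: candidates_def)
  also have "Measurable.pred (PiM {..<n} (\<lambda>_. borel)) \<dots>"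
    by (intro pred_intros_logic(3,4,5) pred_intros_countable(1) pred_le_real measurable_const M
          borel_measurable_const) simp_all
  finally show "Measurable.pred (PiM {..<n} (\<lambda>_. borel))
      (\<lambda>S. k \<in> candidates e m \<tau> S \<and> (\<forall>j\<in>candidates e m \<tau> S. gain_est e m j S \<le> gain_est e m k S))" .
qed

context onb_space begin

lemma sum_energy_le: "finite F \<Longrightarrow> F \<subseteq> {1..} \<Longrightarrow> (\<Sum>k\<in>F. energy e k z) \<le> (norm (snd z))\<^sup>2"
  using bessel_inequality[of F "snd z"] sum_mono[of F "\<lambda>k. energy e k z" "\<lambda>k. (e k \<bullet> snd z)\<^sup>2"]
  by (fastforce simp: energy_def)

lemma sum_energy_est_le:
  "finite F \<Longrightarrow> F \<subseteq> {1..} \<Longrightarrow> (\<Sum>k\<in>F. energy_est e m k S) \<le> (\<Sum>i<m. (norm (snd (S i)))\<^sup>2) / m"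
proof -
  assume F: "finite F" "F \<subseteq> {1..}"
  have "(\<Sum>k\<in>F. energy_est e m k S) = (\<Sum>i<m. \<Sum>k\<in>F. energy e k (S i)) / m"
    unfolding energy_est_def by (simp add: sum_divide_distrib[symmetric] sum.swap[of _ F])
  also have "\<dots> \<le> (\<Sum>i<m. (norm (snd (S i)))\<^sup>2) / m"
    using F by (intro divide_right_mono sum_mono sum_energy_le) auto
  finally show ?thesis .
qed

lemma finite_candidates:
  assumes "0 < \<tau>"
  shows "finite (candidates e m \<tau> S)"
proof -
  define C where "C = (\<Sum>i<m. (norm (snd (S i)))\<^sup>2) / m"
  have "card G \<le> nat \<lceil>C / \<tau>\<rceil>" if G: "G \<subseteq> {k. 1 \<le> k \<and> \<tau> \<le> energy_est e m k S}" "finite G" for G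
  proof -
    have "real (card G) * \<tau> = (\<Sum>k\<in>G. \<tau>)" by simp
    also have "\<dots> \<le> (\<Sum>k\<in>G. energy_est e m k S)" using G by (intro sum_mono) auto
    also have "\<dots> \<le> C" unfolding C_def using G by (intro sum_energy_est_le) auto
    finally have "real (card G) \<le> C / \<tau>" using assms by (simp add: le_divide_eq)
    then show ?thesis by linarith
  qed
  then show ?thesis unfolding candidates_def using finite_if_finite_subsets_card_bdd by blast
qed

lemma selected_maximises_gain_est:
  assumes "0 < \<tau>"
  shows "selected e m \<tau> S \<in> candidates e m \<tau> S"
    "\<And>j. j \<in> candidates e m \<tau> S \<Longrightarrow> gain_est e m j S \<le> gain_est e m (selected e m \<tau> S) S"
proof -
  let ?K = "candidates e m \<tau> S" and ?g = "\<lambda>j. gain_est e m j S"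
  have K: "finite (?g ` ?K)" "?g ` ?K \<noteq> {}"
    using finite_candidates[OF assms] by (auto simp: candidates_def)
  then obtain k where "k \<in> ?K" "?g k = Max (?g ` ?K)"
    by (metis (no_types, lifting) Max_in imageE)
  then have "k \<in> ?K \<and> (\<forall>j\<in>?K. ?g j \<le> ?g k)" using K by simp
  then have "selected e m \<tau> S \<in> ?K \<and> (\<forall>j\<in>?K. ?g j \<le> ?g (selected e m \<tau> S))"
    unfolding selected_def by (rule LeastI)
  then show "selected e m \<tau> S \<in> ?K" "\<And>j. j \<in> ?K \<Longrightarrow> ?g j \<le> ?g (selected e m \<tau> S)" by auto
qed

lemma selection_rule_in_rules:
  assumes "2 * m \<le> n"
  shows "selection_rule e m \<tau> \<in> rules e n"
  unfolding rules_def
proof (intro CollectI conjI allI impI)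
  let ?F = "\<lambda>k (p :: (nat \<Rightarrow> 'v \<times> 'v) \<times> 'v). fk e k (snd p)"
  have "(\<lambda>p. ?F (selected e m \<tau> (fst p)) p) \<in> borel_measurable (PiM {..<n} (\<lambda>_. borel) \<Otimes>\<^sub>M borel)"
  proof (rule measurable_compose_countable)
    show "?F k \<in> borel_measurable (PiM {..<n} (\<lambda>_. borel) \<Otimes>\<^sub>M borel)" for k
      unfolding fk_eq
      by (auto intro!: measurable_compose[OF measurable_snd] borel_measurable_continuous_onI continuous_intros)
    show "(\<lambda>p. selected e m \<tau> (fst p)) \<in> measurable (PiM {..<n} (\<lambda>_. borel) \<Otimes>\<^sub>M borel) (count_space UNIV)"
      by (rule measurable_compose[OF measurable_fst measurable_selected[OF assms]])
  qed
  then show "(\<lambda>p. selection_rule e m \<tau> (fst p) (snd p)) \<in> borel_measurable (PiM {..<n} (\<lambda>_. borel) \<Otimes>\<^sub>M borel)"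
    unfolding selection_rule_def by simp
  show "selection_rule e m \<tau> S x \<in> Yset" if "x \<in> Xset e" for S x
    unfolding selection_rule_def using that by (rule fk_in_Yset)
qed

lemma abs_inner_basis_Yset: "1 \<le> k \<Longrightarrow> y \<in> Yset \<Longrightarrow> \<bar>e k \<bullet> y\<bar> \<le> 1"
  using Cauchy_Schwarz_ineq2[of "e k" y] norm_basis[of k] by (simp add: Yset_def)

lemma loss_fk: "(norm (fk e k x - y))\<^sup>2 = (norm y)\<^sup>2 - gain e k (x, y)"
proof (cases "k = 0")
  case False
  then have "e k \<bullet> e k = 1" using inner_basis[of k k] by simp
  then show ?thesis unfolding fk_eq gain_def power2_norm_eq_inner
    by (simp add: inner_diff algebra_simps power2_eq_square inner_commute)
qed (simp add: fk_0 gain_def)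

lemma energy_eq_on_XY: "z \<in> Xset e \<times> Yset \<Longrightarrow> 1 \<le> k \<Longrightarrow> energy e k z = (e k \<bullet> snd z)\<^sup>2"
  using abs_inner_basis_Yset[of k "snd z"] by (auto simp: energy_def abs_square_le_1)

lemma clipped_gain_eq_on_XY:
  assumes "z \<in> Xset e \<times> Yset"
  shows "clipped_gain e k z = gain e k z"
proof (cases "k = 0")
  case False
  obtain x y where z: "z = (x, y)" "x \<in> Xset e" "y \<in> Yset" using assms by auto
  have a: "\<bar>bit_vector e k \<bullet> x\<bar> \<le> 1" "\<bar>e k \<bullet> y\<bar> \<le> 1"
    using z abs_inner_bit_vector_Xset abs_inner_basis_Yset False by auto
  have "\<bar>gain e k z\<bar> \<le> 2 * \<bar>bit_vector e k \<bullet> x\<bar> * \<bar>e k \<bullet> y\<bar> + (bit_vector e k \<bullet> x)\<^sup>2"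
    unfolding gain_def z by (simp add: abs_mult abs_triangle_ineq4[THEN order_trans])
  also have "\<dots> \<le> 2 * 1 * 1 + 1"
    using a by (intro add_mono mult_mono) (auto simp: abs_square_le_1)
  finally show ?thesis unfolding clipped_gain_def by (simp add: abs_le_iff)
qed (simp add: gain_def)

lemma gain_le_energy_on_XY:
  assumes "z \<in> Xset e \<times> Yset" "1 \<le> k"
  shows "gain e k z \<le> energy e k z"
proof -
  have "gain e k z \<le> (e k \<bullet> snd z)\<^sup>2"
    using zero_le_power2[of "e k \<bullet> snd z - bit_vector e k \<bullet> fst z"]
    unfolding gain_def by (simp add: power2_eq_square algebra_simps)
  then show ?thesis using energy_eq_on_XY[OF assms] by simp
qed

end

section \<open>Risk of the learning rule\<close>

locale learning_problem = onb_space e + iid_sample D n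
  for e :: "nat \<Rightarrow> 'v::{real_inner, complete_space, second_countable_topology}"
  and D :: "('v \<times> 'v) measure" and n :: nat +
  assumes sets_D: "sets D = sets borel"
    and AE_XY: "AE z in D. z \<in> Xset e \<times> Yset"
begin

definition mean_energy :: "nat \<Rightarrow> real" where
  "mean_energy k = (\<integral>z. energy e k z \<partial>D)"

definition mean_gain :: "nat \<Rightarrow> real" where
  "mean_gain k = (\<integral>z. clipped_gain e k z \<partial>D)"

definition null_risk :: real where
  "null_risk = (\<integral>z. (norm (snd z))\<^sup>2 \<partial>D)"

lemma measurable_D: "f \<in> borel_measurable borel \<Longrightarrow> f \<in> borel_measurable D"
  using measurable_cong_sets[OF sets_D refl] by blast

lemma measurable_energy_D: "energy e k \<in> borel_measurable D"
  and measurable_clipped_gain_D: "clipped_gain e k \<in> borel_measurable D"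
  by (auto intro: measurable_D)

lemma measurable_sample:
  "f \<in> measurable (PiM {..<n} (\<lambda>_. borel)) N \<Longrightarrow> f \<in> measurable sample_measure N"
  using measurable_cong_sets[OF sets_PiM_cong[OF refl sets_D] refl] by blast

lemma mean_energy_nonneg: "0 \<le> mean_energy k"
  unfolding mean_energy_def by (simp add: energy_nonneg)

lemma mean_energy_le_one: "mean_energy k \<le> 1"
  unfolding mean_energy_def by (intro integral_le_if_AE_le) (auto simp: energy_le_one)

lemma abs_mean_gain_le: "\<bar>mean_gain k\<bar> \<le> 3"
  unfolding mean_gain_def by (rule abs_integral_le_bound[OF abs_clipped_gain_le])

lemma mean_gain_0 [simp]: "mean_gain 0 = 0"
  by (simp add: mean_gain_def)

lemma mean_gain_le_mean_energy:
  assumes "1 \<le> k" shows "mean_gain k \<le> mean_energy k"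
  unfolding mean_gain_def mean_energy_def
proof (rule integral_mono_AE)
  show "integrable D (clipped_gain e k)"
    by (intro integrable_bounded[of _ 3] measurable_clipped_gain_D abs_clipped_gain_le)
  show "integrable D (energy e k)"
    by (intro integrable_bounded[of _ 1] measurable_energy_D) (simp add: energy_nonneg energy_le_one)
  show "AE z in D. clipped_gain e k z \<le> energy e k z"
    using AE_XY by eventually_elim (simp add: clipped_gain_eq_on_XY gain_le_energy_on_XY[OF _ assms])
qed

lemma sum_mean_energy_le: "finite F \<Longrightarrow> F \<subseteq> {1..} \<Longrightarrow> (\<Sum>k\<in>F. mean_energy k) \<le> 1"
proof -
  assume F: "finite F" "F \<subseteq> {1..}"
  have int: "integrable D (energy e k)" for k
    by (intro integrable_bounded[of _ 1] measurable_energy_D) (simp add: energy_nonneg energy_le_one)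
  have "(\<Sum>k\<in>F. mean_energy k) = (\<integral>z. (\<Sum>k\<in>F. energy e k z) \<partial>D)"
    unfolding mean_energy_def using int by (simp add: Bochner_Integration.integral_sum)
  also have "\<dots> \<le> 1"
  proof (rule integral_le_if_AE_le)
    show "AE z in D. (\<Sum>k\<in>F. energy e k z) \<le> 1"
      using AE_XY
    proof eventually_elim
      case (elim z)
      then have "(norm (snd z))\<^sup>2 \<le> 1" by (auto simp: Yset_def power_le_one)
      then show ?case using sum_energy_le[OF F, of z] by simp
    qed
  qed simp
  finally show ?thesis .
qed

lemma risk_fk: "risk D (fk e k) = null_risk - mean_gain k"
proof -
  have m: "(\<lambda>z. (norm (snd z))\<^sup>2) \<in> borel_measurable D"
    by (intro measurable_D borel_measurable_continuous_onI continuous_intros)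
  have "AE z in D. \<bar>(norm (snd z))\<^sup>2\<bar> \<le> 1"
    using AE_XY by eventually_elim (auto simp: Yset_def power_le_one)
  then have i1: "integrable D (\<lambda>z. (norm (snd z))\<^sup>2)"
    using m by (intro integrable_const_bound[of _ 1]) auto
  have i2: "integrable D (clipped_gain e k)"
    by (intro integrable_bounded[of _ 3] measurable_clipped_gain_D abs_clipped_gain_le)
  have "risk D (fk e k) = (\<integral>z. (norm (snd z))\<^sup>2 - clipped_gain e k z \<partial>D)"
    unfolding risk_def
  proof (rule integral_cong_AE)
    show "(\<lambda>z. (norm (fk e k (fst z) - snd z))\<^sup>2) \<in> borel_measurable D"
      unfolding fk_eq by (intro measurable_D borel_measurable_continuous_onI continuous_intros)
    show "(\<lambda>z. (norm (snd z))\<^sup>2 - clipped_gain e k z) \<in> borel_measurable D"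
      using m measurable_clipped_gain_D by measurable
    show "AE z in D. (norm (fk e k (fst z) - snd z))\<^sup>2 = (norm (snd z))\<^sup>2 - clipped_gain e k z"
      using AE_XY by eventually_elim (simp add: loss_fk clipped_gain_eq_on_XY)
  qed
  also have "\<dots> = null_risk - mean_gain k" unfolding null_risk_def mean_gain_def using i1 i2 by simp
  finally show ?thesis .
qed

lemma variance_energy_est:
  assumes "0 < m" "2 * m \<le> n"
  shows "(\<integral>S. (energy_est e m k S - mean_energy k)\<^sup>2 \<partial>sample_measure) \<le> mean_energy k / m"
proof -
  have "(\<integral>S. (energy_est e m k S - mean_energy k)\<^sup>2 \<partial>sample_measure) \<le> (\<integral>z. (energy e k z)\<^sup>2 \<partial>D) / m"
    unfolding energy_est_def mean_energy_def using assms
    by (intro variance_average_le[of _ 1] measurable_energy_D) (auto simp: energy_nonneg energy_le_one)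
  also have "(\<integral>z. (energy e k z)\<^sup>2 \<partial>D) \<le> mean_energy k" unfolding mean_energy_def
  proof (rule integral_mono)
    show "integrable D (\<lambda>z. (energy e k z)\<^sup>2)"
      using measurable_energy_D by (intro integrable_bounded[of _ 1])
        (auto simp: energy_nonneg energy_le_one power_le_one)
    show "integrable D (energy e k)"
      by (intro integrable_bounded[of _ 1] measurable_energy_D) (simp add: energy_nonneg energy_le_one)
    show "(energy e k z)\<^sup>2 \<le> energy e k z" for z
      using energy_nonneg[of e k z] energy_le_one[of e k z] by (simp add: power2_eq_square mult_left_le_one_le)
  qed
  then have "(\<integral>z. (energy e k z)\<^sup>2 \<partial>D) / m \<le> mean_energy k / m"
    by (intro divide_right_mono) auto
  finally show ?thesis .
qed

definition weighted_sq_dev :: "nat \<Rightarrow> nat \<Rightarrow> (nat \<Rightarrow> 'v \<times> 'v) \<Rightarrow> real" where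
  "weighted_sq_dev m k S = energy_est e m k S * (gain_est e m k S - mean_gain k)\<^sup>2"

definition weighted_dev :: "nat \<Rightarrow> (nat \<Rightarrow> 'v \<times> 'v) \<Rightarrow> real" where
  "weighted_dev m S = (\<Sum>j. weighted_sq_dev m (Suc j) S)"

lemma weighted_sq_dev_nonneg: "0 \<le> weighted_sq_dev m k S"
  unfolding weighted_sq_dev_def by (simp add: energy_est_nonneg)

lemma weighted_sq_dev_le: "weighted_sq_dev m k S \<le> 36 * energy_est e m k S"
proof -
  have "\<bar>gain_est e m k S - mean_gain k\<bar> \<le> 6"
    using abs_gain_est_le[of e m k S] abs_mean_gain_le[of k] by linarith
  then have "(gain_est e m k S - mean_gain k)\<^sup>2 \<le> 36"
    using abs_power2_le by fastforce
  then show ?thesis unfolding weighted_sq_dev_def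
    using energy_est_nonneg[of e m k S] by (simp add: mult.commute mult_left_mono)
qed

lemma integral_weighted_sq_dev_le:
  assumes "0 < m" "2 * m \<le> n"
  shows "(\<integral>S. weighted_sq_dev m k S \<partial>sample_measure) \<le> 9 * mean_energy k / m"
proof -
  have "(\<integral>S. weighted_sq_dev m k S \<partial>sample_measure)
      \<le> mean_energy k * (\<integral>z. (clipped_gain e k z)\<^sup>2 \<partial>D) / m"
    unfolding weighted_sq_dev_def energy_est_def gain_est_def mean_gain_def mean_energy_def using assms
    by (intro weighted_variance_average_le[of _ 3] measurable_energy_D measurable_clipped_gain_D)
      (auto simp: energy_nonneg abs_clipped_gain_le order_trans[OF energy_le_one])
  also have "\<dots> \<le> mean_energy k * 9 / m"
  proof -
    have "(\<integral>z. (clipped_gain e k z)\<^sup>2 \<partial>D) \<le> 9"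
      using abs_power2_le[OF abs_clipped_gain_le[of e k]] by (intro integral_le_if_AE_le) auto
    then show ?thesis using assms mean_energy_nonneg[of k]
      by (intro divide_right_mono mult_left_mono) auto
  qed
  finally show ?thesis by (simp only: mult.commute)
qed

lemma summable_weighted_sq_dev: "summable (\<lambda>j. weighted_sq_dev m (Suc j) S)"
proof (rule summable_comparison_test'[of "\<lambda>j. 36 * energy_est e m (Suc j) S" 0])
  have "(\<Sum>j<N. energy_est e m (Suc j) S) \<le> (\<Sum>i<m. (norm (snd (S i)))\<^sup>2) / m" for N
    using sum_energy_est_le[of "Suc ` {..<N}" m S] by (auto simp: sum.reindex)
  then show "summable (\<lambda>j. 36 * energy_est e m (Suc j) S)"
    by (intro summable_mult summableI_nonneg_bounded) (auto simp: energy_est_nonneg)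
qed (simp add: weighted_sq_dev_nonneg weighted_sq_dev_le)

lemma weighted_dev_nonneg: "0 \<le> weighted_dev m S"
  unfolding weighted_dev_def by (intro suminf_nonneg summable_weighted_sq_dev weighted_sq_dev_nonneg)

lemma weighted_sq_dev_le_weighted_dev: "1 \<le> k \<Longrightarrow> weighted_sq_dev m k S \<le> weighted_dev m S"
  using sum_le_suminf[OF summable_weighted_sq_dev, of "{k - 1}" m S]
  by (simp add: weighted_dev_def weighted_sq_dev_nonneg)

lemma summable_mean_energy: "summable (\<lambda>j. mean_energy (Suc j))"
  and suminf_mean_energy_le: "(\<Sum>j. mean_energy (Suc j)) \<le> 1"
proof -
  have p: "(\<Sum>j<N. mean_energy (Suc j)) \<le> 1" for N
    using sum_mean_energy_le[of "Suc ` {..<N}"] by (auto simp: sum.reindex)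
  show s: "summable (\<lambda>j. mean_energy (Suc j))"
    by (rule summableI_nonneg_bounded[OF _ p]) (simp add: mean_energy_nonneg)
  show "(\<Sum>j. mean_energy (Suc j)) \<le> 1" by (rule suminf_le_const[OF s p])
qed

lemma integral_weighted_dev:
  assumes m: "0 < m" "2 * m \<le> n"
  shows "integrable sample_measure (weighted_dev m)"
    "(\<integral>S. weighted_dev m S \<partial>sample_measure) \<le> 9 / m"
proof -
  let ?t = "\<lambda>j. weighted_sq_dev m (Suc j)"
  have int: "integrable sample_measure (?t j)" for j
  proof (rule integrable_sample_bounded[of _ 36])
    show "?t j \<in> borel_measurable sample_measure" unfolding weighted_sq_dev_def
      using measurable_sample[OF measurable_energy_est] measurable_sample[OF measurable_gain_est[OF m(2)]] m(2)
      by (simp add: power2_eq_square)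
    show "\<bar>?t j S\<bar> \<le> 36" for S
      using weighted_sq_dev_nonneg weighted_sq_dev_le[of m "Suc j" S] energy_est_le_one[of e m "Suc j" S]
      by (simp add: abs_of_nonneg)
  qed
  have bound: "(\<integral>S. ?t j S \<partial>sample_measure) \<le> 9 * mean_energy (Suc j) / m" for j
    by (rule integral_weighted_sq_dev_le[OF m])
  have summ: "summable (\<lambda>j. 9 * mean_energy (Suc j) / m)"
    using summable_mean_energy by (simp add: summable_divide summable_mult)
  have s2: "summable (\<lambda>j. \<integral>S. norm (?t j S) \<partial>sample_measure)"
    using bound weighted_sq_dev_nonneg by (intro summable_comparison_test'[OF summ, of 0]) simp
  have ae: "AE S in sample_measure. summable (\<lambda>j. norm (?t j S))"
    using summable_weighted_sq_dev weighted_sq_dev_nonneg by simp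
  show "integrable sample_measure (weighted_dev m)"
    unfolding weighted_dev_def[abs_def] by (rule integrable_suminf[OF int ae s2])
  have "(\<integral>S. weighted_dev m S \<partial>sample_measure) = (\<Sum>j. \<integral>S. ?t j S \<partial>sample_measure)"
    unfolding weighted_dev_def by (rule integral_suminf[OF int ae s2])
  also have "\<dots> \<le> (\<Sum>j. 9 * mean_energy (Suc j) / m)"
    by (rule suminf_le[OF bound summable_integral[OF int ae s2] summ])
  also have "\<dots> = 9 / m * (\<Sum>j. mean_energy (Suc j))"
    using suminf_mult[OF summable_mean_energy, of "9 / m"] by simp
  also have "\<dots> \<le> 9 / m"
    using suminf_mean_energy_le mult_left_mono[of _ 1 "9 / m"] by simp
  finally show "(\<integral>S. weighted_dev m S \<partial>sample_measure) \<le> 9 / m" .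
qed

lemma gain_est_deviation:
  assumes "0 < \<tau>" "k \<in> candidates e m \<tau> S"
  shows "\<bar>gain_est e m k S - mean_gain k\<bar> \<le> sqrt (weighted_dev m S / \<tau>)"
proof (cases "k = 0")
  case False
  then have k: "1 \<le> k" "\<tau> \<le> energy_est e m k S" using assms(2) by (auto simp: candidates_def)
  have "\<tau> * (gain_est e m k S - mean_gain k)\<^sup>2 \<le> weighted_sq_dev m k S"
    unfolding weighted_sq_dev_def using k by (intro mult_right_mono) auto
  also have "\<dots> \<le> weighted_dev m S" by (rule weighted_sq_dev_le_weighted_dev[OF k(1)])
  finally have "(gain_est e m k S - mean_gain k)\<^sup>2 \<le> weighted_dev m S / \<tau>"
    using assms(1) by (simp add: le_divide_eq mult.commute)
  then show ?thesis using real_sqrt_le_mono by fastforce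
qed (use weighted_dev_nonneg assms(1) in simp)

text \<open>An index \<open>k\<close> that survives the threshold is matched by the selection up to twice the
  deviation radius; one that does not can only lose its (nonnegative part of the) gain.\<close>
lemma mean_gain_shortfall_le:
  assumes "0 < \<tau>"
  shows "mean_gain k - mean_gain (selected e m \<tau> S)
           \<le> 2 * sqrt (weighted_dev m S / \<tau>)
             + (if energy_est e m k S < \<tau> then max 0 (mean_gain k) else 0)"
proof -
  let ?s = "selected e m \<tau> S" and ?r = "sqrt (weighted_dev m S / \<tau>)"
  have r: "0 \<le> ?r" using weighted_dev_nonneg assms by simp
  have low: "gain_est e m ?s S - ?r \<le> mean_gain ?s"
    using gain_est_deviation[OF assms selected_maximises_gain_est(1)[OF assms, of m S]] by linarith
  show ?thesis
  proof (cases "k \<in> candidates e m \<tau> S")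
    case True
    have "mean_gain k \<le> gain_est e m k S + ?r"
      using gain_est_deviation[OF assms True] by linarith
    also have "\<dots> \<le> gain_est e m ?s S + ?r"
      using selected_maximises_gain_est(2)[OF assms True] by simp
    finally show ?thesis using low by auto
  next
    case False
    then have "(if energy_est e m k S < \<tau> then max 0 (mean_gain k) else 0) = max 0 (mean_gain k)"
      by (auto simp: candidates_def)
    moreover have "0 \<le> gain_est e m ?s S"
      using selected_maximises_gain_est(2)[OF assms, of 0] by (simp add: candidates_def)
    ultimately show ?thesis using low r max.cobounded2[of "mean_gain k" 0] by linarith
  qed
qed

lemma expected_threshold_loss_le:
  assumes m: "0 < m" "2 * m \<le> n" and \<tau>: "0 < \<tau>"
  shows "(\<integral>S. (if energy_est e m k S < \<tau> then max 0 (mean_gain k) else 0) \<partial>sample_measure)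
           \<le> 2 * \<tau> + 4 / m"
proof (rule prob_space.threshold_loss_le[OF prob_space_sample])
  show "energy_est e m k \<in> borel_measurable sample_measure"
    using m by (intro measurable_sample measurable_energy_est) auto
  show "\<bar>energy_est e m k S - mean_energy k\<bar> \<le> 1" for S
    using energy_est_nonneg[of e m k S] energy_est_le_one[of e m k S]
      mean_energy_nonneg[of k] mean_energy_le_one[of k] by linarith
  show "max 0 (mean_gain k) \<le> mean_energy k"
    using mean_gain_le_mean_energy[of k] mean_energy_nonneg[of k] by (cases "k = 0") auto
qed (use variance_energy_est[OF m] m \<tau> in auto)

lemma expected_mean_gain_shortfall_le:
  assumes m: "0 < m" "2 * m \<le> n" and \<tau>: "0 < \<tau>" and \<rho>: "0 < \<rho>"
  shows "(\<integral>S. mean_gain k - mean_gain (selected e m \<tau> S) \<partial>sample_measure)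
           \<le> 2 * (\<rho> + 9 / (m * \<tau> * \<rho>)) + 2 * \<tau> + 4 / m"
proof -
  interpret P: prob_space sample_measure by (rule prob_space_sample)
  define loss where "loss S = (if energy_est e m k S < \<tau> then max 0 (mean_gain k) else 0)" for S
  have "(\<lambda>S. mean_gain (selected e m \<tau> S)) \<in> borel_measurable sample_measure"
    using measurable_sample[OF measurable_selected[OF m(2)]] by (rule measurable_compose) simp
  moreover have "\<bar>mean_gain k - mean_gain (selected e m \<tau> S)\<bar> \<le> 6" for S
    using abs_mean_gain_le[of k] abs_mean_gain_le[of "selected e m \<tau> S"] by linarith
  ultimately have i1: "integrable sample_measure (\<lambda>S. mean_gain k - mean_gain (selected e m \<tau> S))"
    by (intro integrable_sample_bounded) auto
  have [measurable]: "energy_est e m k \<in> borel_measurable sample_measure"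
    using m by (intro measurable_sample measurable_energy_est) auto
  have "loss \<in> borel_measurable sample_measure"
    unfolding loss_def by measurable
  then have i2: "integrable sample_measure loss"
    using abs_mean_gain_le[of k] by (intro integrable_sample_bounded[of _ 3]) (auto simp: loss_def)
  have sq: "integrable sample_measure (\<lambda>S. sqrt (weighted_dev m S / \<tau>))"
    "(\<integral>S. sqrt (weighted_dev m S / \<tau>) \<partial>sample_measure) \<le> \<rho> + (9 / m) / (\<tau> * \<rho>)"
    using P.integral_sqrt_le[OF integral_weighted_dev(1)[OF m] weighted_dev_nonneg
        integral_weighted_dev(2)[OF m] \<tau> \<rho>] by auto
  have "(\<integral>S. mean_gain k - mean_gain (selected e m \<tau> S) \<partial>sample_measure)
      \<le> (\<integral>S. 2 * sqrt (weighted_dev m S / \<tau>) + loss S \<partial>sample_measure)"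
  proof (rule integral_mono[OF i1])
    show "integrable sample_measure (\<lambda>S. 2 * sqrt (weighted_dev m S / \<tau>) + loss S)"
      using sq(1) i2 by simp
    show "mean_gain k - mean_gain (selected e m \<tau> S) \<le> 2 * sqrt (weighted_dev m S / \<tau>) + loss S" for S
      unfolding loss_def by (rule mean_gain_shortfall_le[OF \<tau>])
  qed
  also have "\<dots> = 2 * (\<integral>S. sqrt (weighted_dev m S / \<tau>) \<partial>sample_measure) + (\<integral>S. loss S \<partial>sample_measure)"
    using sq(1) i2 by simp
  also have "\<dots> \<le> 2 * (\<rho> + 9 / (m * \<tau> * \<rho>)) + (2 * \<tau> + 4 / m)"
    using sq(2) expected_threshold_loss_le[OF m \<tau>, of k] unfolding loss_def[symmetric]
    by (intro add_mono) (auto simp: field_simps)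
  finally show ?thesis by simp
qed

lemma expected_excess_risk_selection_le:
  assumes m: "0 < m" "2 * m \<le> n" and \<tau>: "0 < \<tau>" and \<rho>: "0 < \<rho>"
  shows "(\<integral>S. risk D (selection_rule e m \<tau> S) - (INF f\<in>Fcl e. risk D f) \<partial>sample_measure)
           \<le> 2 * (\<rho> + 9 / (m * \<tau> * \<rho>)) + 2 * \<tau> + 4 / m" (is "_ \<le> ?B")
proof -
  interpret P: prob_space sample_measure by (rule prob_space_sample)
  have "(\<lambda>S. mean_gain (selected e m \<tau> S)) \<in> borel_measurable sample_measure"
    using measurable_sample[OF measurable_selected[OF m(2)]] by (rule measurable_compose) simp
  then have int: "integrable sample_measure (\<lambda>S. mean_gain (selected e m \<tau> S))"
    using abs_mean_gain_le by (intro integrable_sample_bounded[of _ 3])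
  have "null_risk - (\<integral>S. mean_gain (selected e m \<tau> S) \<partial>sample_measure) - ?B \<le> (INF k. null_risk - mean_gain k)"
  proof (rule cINF_greatest)
    fix k
    have "mean_gain k - (\<integral>S. mean_gain (selected e m \<tau> S) \<partial>sample_measure) \<le> ?B"
      using expected_mean_gain_shortfall_le[OF m \<tau> \<rho>, of k] int by (simp add: P.prob_space)
    then show "null_risk - (\<integral>S. mean_gain (selected e m \<tau> S) \<partial>sample_measure) - ?B \<le> null_risk - mean_gain k"
      by simp
  qed simp
  moreover have "(INF f\<in>Fcl e. risk D f) = (INF k. null_risk - mean_gain k)"
    unfolding Fcl_eq_range image_image risk_fk ..
  ultimately show ?thesis
    using int by (simp add: selection_rule_def risk_fk P.prob_space)
qed

end

section \<open>Minimax excess risk\<close>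

definition excess_risk :: "(nat \<Rightarrow> 'v::{real_inner,second_countable_topology}) \<Rightarrow> nat
    \<Rightarrow> ((nat \<Rightarrow> 'v \<times> 'v) \<Rightarrow> 'v \<Rightarrow> 'v) \<Rightarrow> ('v \<times> 'v) measure \<Rightarrow> real" where
  "excess_risk e n h D = (\<integral>S. (risk D (h S) - (INF f\<in>Fcl e. risk D f)) \<partial>(PiM {..<n} (\<lambda>_. D)))"

lemma minimax_eq_excess_risk: "minimax e n = (INF h\<in>rules e n. SUP D\<in>dists e. excess_risk e n h D)"
  unfolding minimax_def excess_risk_def ..

lemma risk_nonneg: "0 \<le> risk D f"
  unfolding risk_def by simp

lemma INF_risk_nonneg: "0 \<le> (INF f\<in>Fcl e. risk D f)"
  by (rule cINF_greatest) (auto simp: Fcl_def risk_nonneg)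

lemma excess_risk_le_4:
  assumes h: "h \<in> rules e n" and D: "D \<in> dists e"
  shows "excess_risk e n h D \<le> 4"
proof -
  have pD: "prob_space D" and ae: "AE z in D. z \<in> Xset e \<times> Yset" using D unfolding dists_def by auto
  have r4: "risk D (h S) \<le> 4" for S unfolding risk_def
  proof (rule prob_space.integral_le_if_AE_le[OF pD])
    show "AE z in D. (norm (h S (fst z) - snd z))\<^sup>2 \<le> 4"
      using ae
    proof eventually_elim
      case (elim z)
      then have "norm (h S (fst z)) \<le> 1" "norm (snd z) \<le> 1"
        using h unfolding rules_def Yset_def by auto
      then have "\<bar>norm (h S (fst z) - snd z)\<bar> \<le> 2" using norm_triangle_ineq4[of "h S (fst z)" "snd z"] by simp
      from abs_power2_le[OF this] show ?case by simp
    qed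
  qed simp
  have "AE S in PiM {..<n} (\<lambda>_. D). risk D (h S) - (INF f\<in>Fcl e. risk D f) \<le> 4"
    using INF_risk_nonneg[of D e] by (intro AE_I2) (smt (verit) r4)
  moreover have "prob_space (PiM {..<n} (\<lambda>_. D))" by (rule prob_space_PiM) (use pD in auto)
  ultimately show ?thesis unfolding excess_risk_def
    by (intro prob_space.integral_le_if_AE_le) auto
qed

lemma return_origin_in_dists: "return borel (0, 0) \<in> dists e"
proof -
  have "0 \<in> Xset e"
    unfolding Xset_def by (rule CollectI, rule exI[of _ "\<lambda>_. 0"]) simp
  then have "AE z in return borel (0, 0). z \<in> Xset e \<times> Yset"
    by (intro AE_I'[of "UNIV - {(0, 0)}"]) (auto simp: null_sets_def Yset_def)
  then show ?thesis unfolding dists_def by (auto intro: prob_space_return)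
qed

text \<open>Rules need not output members of \<open>Fcl e\<close>, so an excess risk may be negative; under
  the point mass at the origin, however, the zero predictor is exact.\<close>
lemma excess_risk_return_origin_nonneg:
  fixes e :: "nat \<Rightarrow> 'v::{real_inner,second_countable_topology}"
  shows "0 \<le> excess_risk e n h (return borel (0, 0))"
proof -
  let ?\<delta> = "return borel (0::'v, 0::'v)"
  have "(\<lambda>z::'v \<times> 'v. (norm (0 - snd z))\<^sup>2) \<in> borel_measurable borel"
    by (intro borel_measurable_continuous_onI continuous_intros)
  then have "risk ?\<delta> (\<lambda>_. 0) = 0" unfolding risk_def by (subst integral_return) auto
  moreover have "(INF f\<in>Fcl e. risk ?\<delta> f) \<le> risk ?\<delta> (\<lambda>_. 0)"
    by (rule cINF_lower) (auto simp: Fcl_def intro!: bdd_belowI2[where m=0] risk_nonneg)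
  ultimately show ?thesis unfolding excess_risk_def
    by (intro Bochner_Integration.integral_nonneg) (use risk_nonneg in \<open>auto intro: order_trans\<close>)
qed

lemma SUP_excess_risk_nonneg:
  assumes "h \<in> rules e n"
  shows "0 \<le> (SUP D\<in>dists e. excess_risk e n h D)"
proof -
  have "bdd_above (excess_risk e n h ` dists e)"
    by (rule bdd_aboveI2[where M=4]) (rule excess_risk_le_4[OF assms])
  then have "excess_risk e n h (return borel (0, 0)) \<le> (SUP D\<in>dists e. excess_risk e n h D)"
    by (rule cSUP_upper[OF return_origin_in_dists])
  then show ?thesis using excess_risk_return_origin_nonneg[of e n h] by linarith
qed

lemma minimax_nonneg: "0 \<le> minimax e n"
  unfolding minimax_eq_excess_risk
proof (rule cINF_greatest)
  show "rules e n \<noteq> {}" unfolding rules_def Yset_def by (auto intro!: exI[of _ "\<lambda>S x. 0"])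
qed (rule SUP_excess_risk_nonneg)

lemma minimax_le:
  assumes "h \<in> rules e n" "\<And>D. D \<in> dists e \<Longrightarrow> excess_risk e n h D \<le> B"
  shows "minimax e n \<le> B"
proof -
  have "minimax e n \<le> (SUP D\<in>dists e. excess_risk e n h D)"
    unfolding minimax_eq_excess_risk
    by (rule cINF_lower[OF _ assms(1)]) (auto intro!: bdd_belowI2[of _ 0] SUP_excess_risk_nonneg)
  also have "\<dots> \<le> B" using return_origin_in_dists by (intro cSUP_least assms(2)) auto
  finally show ?thesis .
qed

lemma filterlim_div2_at_top: "filterlim (\<lambda>n::nat. real (n div 2)) at_top sequentially"
  unfolding filterlim_at_top
proof
  fix Z :: real
  have "Z \<le> real (n div 2)" if "2 * nat \<lceil>Z\<rceil> \<le> n" for n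
  proof -
    have "nat \<lceil>Z\<rceil> \<le> n div 2" using that by linarith
    then show ?thesis by linarith
  qed
  then show "eventually (\<lambda>n. Z \<le> real (n div 2)) sequentially"
    unfolding eventually_sequentially by blast
qed

context onb_space begin

lemma learning_problem_if_dists: "D \<in> dists e \<Longrightarrow> learning_problem e D"
  unfolding learning_problem_def learning_problem_axioms_def iid_sample_def dists_def
  using onb_space_axioms by auto

lemma minimax_le_bound:
  fixes m :: nat and \<tau> \<rho> :: real
  assumes m: "0 < m" "2 * m \<le> n" and \<tau>: "0 < \<tau>" and \<rho>: "0 < \<rho>"
  shows "minimax e n \<le> 2 * (\<rho> + 9 / (m * \<tau> * \<rho>)) + 2 * \<tau> + 4 / m"
proof (rule minimax_le[OF selection_rule_in_rules[OF m(2)]])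
  fix D assume "D \<in> dists e"
  from learning_problem.expected_excess_risk_selection_le[OF learning_problem_if_dists[OF this] m \<tau> \<rho>]
  show "excess_risk e n (selection_rule e m \<tau>) D \<le> 2 * (\<rho> + 9 / (m * \<tau> * \<rho>)) + 2 * \<tau> + 4 / m"
    unfolding excess_risk_def .
qed

lemma minimax_tendsto_0: "(\<lambda>n. minimax e n) \<longlonglongrightarrow> 0"
proof -
  define bound :: "real \<Rightarrow> real" where
    "bound x = 2 * (x powr (-1/4) + 9 / (x * x powr (-1/4) * x powr (-1/4))) + 2 * x powr (-1/4) + 4 / x"
    for x
  have "(bound \<longlongrightarrow> 0) at_top" unfolding bound_def by real_asymp
  then have lim: "(\<lambda>n. bound (real (n div 2))) \<longlonglongrightarrow> 0"
    by (rule filterlim_compose[OF _ filterlim_div2_at_top])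
  have "minimax e n \<le> bound (real (n div 2))" if "2 \<le> n" for n
  proof -
    have m: "0 < n div 2" "2 * (n div 2) \<le> n" using that by auto
    then have "0 < real (n div 2) powr (-1/4)" by simp
    from minimax_le_bound[OF m this this] show ?thesis unfolding bound_def .
  qed
  then have "eventually (\<lambda>n. minimax e n \<le> bound (real (n div 2))) sequentially"
    unfolding eventually_sequentially by blast
  then show ?thesis
    by (intro tendsto_sandwich[OF _ _ tendsto_const lim]) (simp_all add: minimax_nonneg)
qed

end

theorem mainTheorem7:
  fixes e :: "nat \<Rightarrow> 'v::{real_inner, complete_space, second_countable_topology}"
  assumes "onb e"
  shows "Fcl e \<subseteq> {T. trace_class T}
    \<and> (\<forall>T::nat. (\<forall>t\<in>{1..T}. e t \<in> Xset e \<and> (0::'v) \<in> Yset)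
                 \<and> rad_sup e T e (\<lambda>_. 0) \<ge> real T / 2)
    \<and> limsup (\<lambda>n. ereal (minimax e n)) = 0"
proof -
  interpret onb_space e using assms by unfold_locales
  have "limsup (\<lambda>n. ereal (minimax e n)) = ereal 0"
    using lim_imp_Limsup[OF trivial_limit_sequentially tendsto_ereal[OF minimax_tendsto_0]] .
  then show ?thesis
    using Fcl_trace_class basis_in_Xset rad_sup_basis_ge by (auto simp: Yset_def zero_ereal_def)
qed

end
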